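(* Let $\Lambda$ be an Artin algebra and $0\to A\xrightarrow{g}B\xrightarrow{f}C\to0$ a non-split exact sequence in $\mathrm{mod}\,\Lambda$ with $B$ projective and injective. Then the following are equivalent: (1) $A$ is indecomposable and $g$ is left minimal; (2) $C$ is indecomposable and $f$ is right minimal.
   Context: $\mathrm{mod}\,\Lambda$ is the category of finitely generated left $\Lambda$-modules. A morphism $g:A\to B$ is left minimal if every endomorphism $h:B\to B$ with $hg=g$ is an automorphism; dually, $f:B\to C$ is right minimal if every endomorphism $h:B\to B$ with $fh=f$ is an automorphism. *)

theory Defs
  imports "HOL-Algebra.Algebra"
begin

text \<open>Left modules over a (not necessarily commutative) ring L.
  HOL-Algebra's locale module requires a commutative ring, so we define left modules here.\<close>

definition lmodule :: "'r ring \<Rightarrow> ('r, 'm) module \<Rightarrow> bool" where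
  "lmodule L M \<longleftrightarrow> ring L \<and> abelian_group M \<and>
     (\<forall>a\<in>carrier L. \<forall>x\<in>carrier M. a \<odot>\<^bsub>M\<^esub> x \<in> carrier M) \<and>
     (\<forall>a\<in>carrier L. \<forall>b\<in>carrier L. \<forall>x\<in>carrier M.
        (a \<oplus>\<^bsub>L\<^esub> b) \<odot>\<^bsub>M\<^esub> x = (a \<odot>\<^bsub>M\<^esub> x) \<oplus>\<^bsub>M\<^esub> (b \<odot>\<^bsub>M\<^esub> x)) \<and>
     (\<forall>a\<in>carrier L. \<forall>x\<in>carrier M. \<forall>y\<in>carrier M.
        a \<odot>\<^bsub>M\<^esub> (x \<oplus>\<^bsub>M\<^esub> y) = (a \<odot>\<^bsub>M\<^esub> x) \<oplus>\<^bsub>M\<^esub> (a \<odot>\<^bsub>M\<^esub> y)) \<and>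
     (\<forall>a\<in>carrier L. \<forall>b\<in>carrier L. \<forall>x\<in>carrier M.
        (a \<otimes>\<^bsub>L\<^esub> b) \<odot>\<^bsub>M\<^esub> x = a \<odot>\<^bsub>M\<^esub> (b \<odot>\<^bsub>M\<^esub> x)) \<and>
     (\<forall>x\<in>carrier M. \<one>\<^bsub>L\<^esub> \<odot>\<^bsub>M\<^esub> x = x)"

definition fg_lmodule :: "'r ring \<Rightarrow> ('r, 'm) module \<Rightarrow> bool" where
  "fg_lmodule L M \<longleftrightarrow> lmodule L M \<and>
     (\<exists>S. finite S \<and> S \<subseteq> carrier M \<and>
        (\<forall>x\<in>carrier M. \<exists>c. c \<in> S \<rightarrow> carrier L \<and> x = finsum M (\<lambda>s. c s \<odot>\<^bsub>M\<^esub> s) S))"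

definition lhom :: "'r ring \<Rightarrow> ('r, 'm) module \<Rightarrow> ('r, 'n) module \<Rightarrow> ('m \<Rightarrow> 'n) \<Rightarrow> bool" where
  "lhom L M N h \<longleftrightarrow> h \<in> carrier M \<rightarrow> carrier N \<and>
     (\<forall>x\<in>carrier M. \<forall>y\<in>carrier M. h (x \<oplus>\<^bsub>M\<^esub> y) = h x \<oplus>\<^bsub>N\<^esub> h y) \<and>
     (\<forall>a\<in>carrier L. \<forall>x\<in>carrier M. h (a \<odot>\<^bsub>M\<^esub> x) = a \<odot>\<^bsub>N\<^esub> h x)"

definition artinian_cring :: "'k ring \<Rightarrow> bool" where
  "artinian_cring R \<longleftrightarrow> cring R \<and>
     (\<forall>I :: nat \<Rightarrow> 'k set. (\<forall>n. ideal (I n) R \<and> I (Suc n) \<subseteq> I n) \<longrightarrow>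
        (\<exists>N. \<forall>n\<ge>N. I n = I N))"

definition artin_algebra :: "'k ring \<Rightarrow> ('k \<Rightarrow> 'r) \<Rightarrow> 'r ring \<Rightarrow> bool" where
  "artin_algebra R phi L \<longleftrightarrow> artinian_cring R \<and> ring L \<and> phi \<in> ring_hom R L \<and>
     (\<forall>r\<in>carrier R. \<forall>x\<in>carrier L. phi r \<otimes>\<^bsub>L\<^esub> x = x \<otimes>\<^bsub>L\<^esub> phi r) \<and>
     (\<exists>S. finite S \<and> S \<subseteq> carrier L \<and>
        (\<forall>x\<in>carrier L. \<exists>c. c \<in> S \<rightarrow> carrier R \<and>
           x = finsum L (\<lambda>s. phi (c s) \<otimes>\<^bsub>L\<^esub> s) S))"

text \<open>Test objects range over finitely generated
  L-modules whose elements are sets of sequences in L; every finitely generated L-module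
  (a quotient of L^n) is isomorphic to such a module, so this is the usual notion.\<close>
definition proj_mod :: "'r ring \<Rightarrow> ('r, 'p) module \<Rightarrow> bool" where
  "proj_mod L P \<longleftrightarrow> fg_lmodule L P \<and>
     (\<forall>(M :: ('r, (nat \<Rightarrow> 'r) set) module) (N :: ('r, (nat \<Rightarrow> 'r) set) module) h p.
        fg_lmodule L M \<and> fg_lmodule L N \<and> lhom L M N h \<and> h ` carrier M = carrier N \<and>
        lhom L P N p \<longrightarrow>
        (\<exists>q. lhom L P M q \<and> (\<forall>x\<in>carrier P. h (q x) = p x)))"

definition inj_mod :: "'r ring \<Rightarrow> ('r, 'p) module \<Rightarrow> bool" where
  "inj_mod L I \<longleftrightarrow> fg_lmodule L I \<and>
     (\<forall>(M :: ('r, (nat \<Rightarrow> 'r) set) module) (N :: ('r, (nat \<Rightarrow> 'r) set) module) h p.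
        fg_lmodule L M \<and> fg_lmodule L N \<and> lhom L M N h \<and> inj_on h (carrier M) \<and>
        lhom L M I p \<longrightarrow>
        (\<exists>q. lhom L N I q \<and> (\<forall>x\<in>carrier M. q (h x) = p x)))"

definition submod :: "'r ring \<Rightarrow> ('r, 'm) module \<Rightarrow> 'm set \<Rightarrow> bool" where
  "submod L M U \<longleftrightarrow> U \<subseteq> carrier M \<and> \<zero>\<^bsub>M\<^esub> \<in> U \<and>
     (\<forall>x\<in>U. \<forall>y\<in>U. x \<oplus>\<^bsub>M\<^esub> y \<in> U) \<and> (\<forall>a\<in>carrier L. \<forall>x\<in>U. a \<odot>\<^bsub>M\<^esub> x \<in> U)"

definition indecomposable :: "'r ring \<Rightarrow> ('r, 'm) module \<Rightarrow> bool" where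
  "indecomposable L M \<longleftrightarrow> carrier M \<noteq> {\<zero>\<^bsub>M\<^esub>} \<and>
     (\<forall>U V. submod L M U \<and> submod L M V \<and> U \<inter> V = {\<zero>\<^bsub>M\<^esub>} \<and>
        {x \<oplus>\<^bsub>M\<^esub> y | x y. x \<in> U \<and> y \<in> V} = carrier M \<longrightarrow>
        U = {\<zero>\<^bsub>M\<^esub>} \<or> V = {\<zero>\<^bsub>M\<^esub>})"

definition left_minimal :: "'r ring \<Rightarrow> ('r, 'a) module \<Rightarrow> ('r, 'b) module \<Rightarrow> ('a \<Rightarrow> 'b) \<Rightarrow> bool" where
  "left_minimal L A B g \<longleftrightarrow>
     (\<forall>h. lhom L B B h \<and> (\<forall>x\<in>carrier A. h (g x) = g x) \<longrightarrow> bij_betw h (carrier B) (carrier B))"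

definition right_minimal :: "'r ring \<Rightarrow> ('r, 'b) module \<Rightarrow> ('r, 'c) module \<Rightarrow> ('b \<Rightarrow> 'c) \<Rightarrow> bool" where
  "right_minimal L B C f \<longleftrightarrow>
     (\<forall>h. lhom L B B h \<and> (\<forall>x\<in>carrier B. f (h x) = f x) \<longrightarrow> bij_betw h (carrier B) (carrier B))"

definition short_exact :: "'r ring \<Rightarrow> ('r, 'a) module \<Rightarrow> ('r, 'b) module \<Rightarrow> ('r, 'c) module \<Rightarrow>
    ('a \<Rightarrow> 'b) \<Rightarrow> ('b \<Rightarrow> 'c) \<Rightarrow> bool" where
  "short_exact L A B C g f \<longleftrightarrow> lhom L A B g \<and> lhom L B C f \<and> inj_on g (carrier A) \<and>
     f ` carrier B = carrier C \<and> g ` carrier A = {y \<in> carrier B. f y = \<zero>\<^bsub>C\<^esub>}"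

definition ses_splits :: "'r ring \<Rightarrow> ('r, 'b) module \<Rightarrow> ('r, 'c) module \<Rightarrow> ('b \<Rightarrow> 'c) \<Rightarrow> bool" where
  "ses_splits L B C f \<longleftrightarrow> (\<exists>s. lhom L C B s \<and> (\<forall>z\<in>carrier C. f (s z) = z))"

end

(*
  Since B is injective, endomorphisms of A extend along g to B; since B is projective,
  endomorphisms of C lift along f to B. Finitely generated modules over an Artin algebra satisfy
  the descending chain condition, so Fitting's lemma holds: an endomorphism of an indecomposable
  module is an automorphism or nilpotent, and its endomorphism ring is local.

  An endomorphism of B acting trivially on C restricts to A; if A is indecomposable the
  restriction is an automorphism, since a nilpotent one would make a power of the endomorphism
  factor through a section of f. Dually for endomorphisms of B fixing A and the maps they induce
  on C, using that g has no retraction. Minimality of g (resp. f) then turns such an endomorphism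
  of B into an automorphism, which is minimality of f (resp. g).

  Indecomposability is transferred through idempotents: lifts of e and 1 - e for an idempotent e
  at one end give endomorphisms at the other end whose sum is an automorphism; by locality one
  summand is an automorphism, and minimality forces e to be 0 or 1.
*)

theory Submission
  imports Defs
begin

section \<open>Left modules and linear maps\<close>

locale lmod =
  fixes L and M (structure)
  assumes lmodule: "lmodule L M"
begin

sublocale L: ring L using lmodule unfolding lmodule_def by auto
sublocale abelian_group M using lmodule unfolding lmodule_def by auto

lemma smult_closed [simp, intro]: "a \<in> carrier L \<Longrightarrow> x \<in> carrier M \<Longrightarrow> a \<odot> x \<in> carrier M"
  using lmodule unfolding lmodule_def by auto

lemma smult_l_distr: "a \<in> carrier L \<Longrightarrow> b \<in> carrier L \<Longrightarrow> x \<in> carrier M \<Longrightarrow>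
    (a \<oplus>\<^bsub>L\<^esub> b) \<odot> x = a \<odot> x \<oplus> b \<odot> x"
  using lmodule unfolding lmodule_def by auto

lemma smult_r_distr: "a \<in> carrier L \<Longrightarrow> x \<in> carrier M \<Longrightarrow> y \<in> carrier M \<Longrightarrow>
    a \<odot> (x \<oplus> y) = a \<odot> x \<oplus> a \<odot> y"
  using lmodule unfolding lmodule_def by auto

lemma smult_assoc: "a \<in> carrier L \<Longrightarrow> b \<in> carrier L \<Longrightarrow> x \<in> carrier M \<Longrightarrow>
    (a \<otimes>\<^bsub>L\<^esub> b) \<odot> x = a \<odot> (b \<odot> x)"
  using lmodule unfolding lmodule_def by auto

lemma smult_one [simp]: "x \<in> carrier M \<Longrightarrow> \<one>\<^bsub>L\<^esub> \<odot> x = x"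
  using lmodule unfolding lmodule_def by auto

lemma smult_r_null [simp]: "a \<in> carrier L \<Longrightarrow> a \<odot> \<zero> = \<zero>"
  using smult_r_distr[of a \<zero> \<zero>] by (metis add.r_cancel_one' smult_closed zero_closed l_zero)

lemma smult_l_null [simp]: "x \<in> carrier M \<Longrightarrow> \<zero>\<^bsub>L\<^esub> \<odot> x = \<zero>"
  using smult_l_distr[of "\<zero>\<^bsub>L\<^esub>" "\<zero>\<^bsub>L\<^esub>" x]
  by (metis add.r_cancel_one' smult_closed L.zero_closed L.l_zero)

lemma smult_l_minus: "a \<in> carrier L \<Longrightarrow> x \<in> carrier M \<Longrightarrow> (\<ominus>\<^bsub>L\<^esub> a) \<odot> x = \<ominus> (a \<odot> x)"
  using smult_l_distr[of "\<ominus>\<^bsub>L\<^esub> a" a x] by (simp add: L.l_neg minus_equality)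

lemma smult_r_minus: "a \<in> carrier L \<Longrightarrow> x \<in> carrier M \<Longrightarrow> a \<odot> (\<ominus> x) = \<ominus> (a \<odot> x)"
  using smult_r_distr[of a "\<ominus> x" x] by (metis a_inv_closed l_neg minus_equality smult_closed smult_r_null)

lemma finsum_smult: "finite I \<Longrightarrow> a \<in> carrier L \<Longrightarrow> f \<in> I \<rightarrow> carrier M \<Longrightarrow>
    a \<odot> finsum M f I = finsum M (\<lambda>i. a \<odot> f i) I"
  by (induct I rule: finite_induct) (simp_all add: finsum_insert smult_r_distr finsum_closed Pi_def)

lemma minus_eq_zero_iff:
  assumes "x \<in> carrier M" "y \<in> carrier M" shows "x \<ominus> y = \<zero> \<longleftrightarrow> x = y"
proof
  assume "x \<ominus> y = \<zero>"
  moreover have "x = (x \<ominus> y) \<oplus> y" using assms by (simp add: minus_eq a_assoc l_neg)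
  ultimately show "x = y" using assms(2) by simp
qed (use assms in \<open>simp add: r_neg minus_eq\<close>)

lemma minus_add_cancel: "x \<in> carrier M \<Longrightarrow> y \<in> carrier M \<Longrightarrow> (x \<ominus> y) \<oplus> y = x"
  by (simp add: minus_eq a_assoc l_neg)

lemma add_minus_cancel: "x \<in> carrier M \<Longrightarrow> y \<in> carrier M \<Longrightarrow> y \<oplus> (x \<ominus> y) = x"
  by (simp add: minus_eq a_lcomm r_neg)

lemma submod_closed: "submod L M U \<Longrightarrow> x \<in> U \<Longrightarrow> x \<in> carrier M"
  unfolding submod_def by auto

lemma submod_minus: "submod L M U \<Longrightarrow> x \<in> U \<Longrightarrow> y \<in> U \<Longrightarrow> x \<ominus> y \<in> U"
  unfolding submod_def a_minus_def
  by (metis L.a_inv_closed L.one_closed smult_l_minus smult_one subsetD)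

lemma lmodule_submod: assumes "submod L M U" shows "lmodule L (M\<lparr>carrier := U\<rparr>)"
proof -
  have U: "U \<subseteq> carrier M" "\<zero> \<in> U" "\<And>x y. x \<in> U \<Longrightarrow> y \<in> U \<Longrightarrow> x \<oplus> y \<in> U"
    "\<And>a x. a \<in> carrier L \<Longrightarrow> x \<in> U \<Longrightarrow> a \<odot> x \<in> U"
    using assms unfolding submod_def by auto
  have "abelian_group (M\<lparr>carrier := U\<rparr>)"
  proof (rule abelian_groupI)
    fix x assume x: "x \<in> carrier (M\<lparr>carrier := U\<rparr>)"
    have "\<ominus> x \<in> U" using submod_minus[OF assms U(2)] x by (simp add: a_minus_def subsetD[OF U(1)])
    then show "\<exists>y\<in>carrier (M\<lparr>carrier := U\<rparr>). y \<oplus>\<^bsub>M\<lparr>carrier := U\<rparr>\<^esub> x = \<zero>\<^bsub>M\<lparr>carrier := U\<rparr>\<^esub>"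
      using x U(1) by (auto intro!: bexI[of _ "\<ominus> x"] l_neg)
  qed (use U in \<open>auto simp: a_ac subset_iff\<close>)
  then show ?thesis
    using lmodule U unfolding lmodule_def by (auto simp: subset_iff)
qed

end

lemma lhom_closed: "lhom L M N h \<Longrightarrow> x \<in> carrier M \<Longrightarrow> h x \<in> carrier N"
  unfolding lhom_def by auto

lemma lhom_add: "lhom L M N h \<Longrightarrow> x \<in> carrier M \<Longrightarrow> y \<in> carrier M \<Longrightarrow>
    h (x \<oplus>\<^bsub>M\<^esub> y) = h x \<oplus>\<^bsub>N\<^esub> h y"
  unfolding lhom_def by auto

lemma lhom_smult: "lhom L M N h \<Longrightarrow> a \<in> carrier L \<Longrightarrow> x \<in> carrier M \<Longrightarrow>
    h (a \<odot>\<^bsub>M\<^esub> x) = a \<odot>\<^bsub>N\<^esub> h x"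
  unfolding lhom_def by auto

lemma lhom_id: "lhom L M M (\<lambda>x. x)"
  unfolding lhom_def by auto

lemma lhom_comp: "lhom L M N h \<Longrightarrow> lhom L N P k \<Longrightarrow> lhom L M P (\<lambda>x. k (h x))"
  unfolding lhom_def by (auto simp: Pi_def)

lemma lhom_funpow: "lhom L M M h \<Longrightarrow> lhom L M M (h ^^ n)"
proof (induct n)
  case (Suc n) then show ?case using lhom_comp[OF Suc(1)[OF Suc(2)] Suc(2)] by (simp add: comp_def)
qed (simp add: id_def lhom_id)

lemma lhom_zero:
  assumes "lmodule L M" "lmodule L N" "lhom L M N h" shows "h \<zero>\<^bsub>M\<^esub> = \<zero>\<^bsub>N\<^esub>"
proof -
  interpret M: lmod L M by unfold_locales fact
  interpret N: lmod L N by unfold_locales fact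
  have "h \<zero>\<^bsub>M\<^esub> \<oplus>\<^bsub>N\<^esub> h \<zero>\<^bsub>M\<^esub> = h \<zero>\<^bsub>M\<^esub>" using lhom_add[OF assms(3), of "\<zero>\<^bsub>M\<^esub>" "\<zero>\<^bsub>M\<^esub>"] by simp
  then show ?thesis using lhom_closed[OF assms(3) M.zero_closed] by (metis N.add.r_cancel_one' N.zero_closed)
qed

lemma lhom_minus:
  assumes "lmodule L M" "lmodule L N" "lhom L M N h" "x \<in> carrier M" "y \<in> carrier M"
  shows "h (x \<ominus>\<^bsub>M\<^esub> y) = h x \<ominus>\<^bsub>N\<^esub> h y"
proof -
  interpret M: lmod L M by unfold_locales fact
  interpret N: lmod L N by unfold_locales fact
  have "\<ominus>\<^bsub>M\<^esub> y = (\<ominus>\<^bsub>L\<^esub> \<one>\<^bsub>L\<^esub>) \<odot>\<^bsub>M\<^esub> y" and "\<ominus>\<^bsub>N\<^esub> h y = (\<ominus>\<^bsub>L\<^esub> \<one>\<^bsub>L\<^esub>) \<odot>\<^bsub>N\<^esub> h y"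
    using assms(5) lhom_closed[OF assms(3,5)] by (simp_all add: M.smult_l_minus N.smult_l_minus)
  then show ?thesis
    using assms(3-5) by (simp add: a_minus_def lhom_add lhom_smult)
qed

lemma lhom_finsum:
  assumes "lmodule L M" "lmodule L N" "lhom L M N h" "finite I" "f \<in> I \<rightarrow> carrier M"
  shows "h (finsum M f I) = finsum N (\<lambda>i. h (f i)) I"
proof -
  interpret M: lmod L M by unfold_locales fact
  interpret N: lmod L N by unfold_locales fact
  show ?thesis using assms(4,5)
    by (induct I rule: finite_induct)
      (simp_all add: M.finsum_insert N.finsum_insert M.finsum_closed lhom_zero[OF assms(1-3)]
        lhom_add[OF assms(3)] lhom_closed[OF assms(3)] Pi_def)
qed

lemma lhom_inj_onI:
  assumes "lmodule L M" "lmodule L N" "lhom L M N h"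
    and "\<And>x. x \<in> carrier M \<Longrightarrow> h x = \<zero>\<^bsub>N\<^esub> \<Longrightarrow> x = \<zero>\<^bsub>M\<^esub>"
  shows "inj_on h (carrier M)"
proof (rule inj_onI)
  interpret M: lmod L M by unfold_locales fact
  interpret N: lmod L N by unfold_locales fact
  fix x y assume x: "x \<in> carrier M" and y: "y \<in> carrier M" and "h x = h y"
  then have "h (x \<ominus>\<^bsub>M\<^esub> y) = \<zero>\<^bsub>N\<^esub>"
    using lhom_minus[OF assms(1-3) x y] lhom_closed[OF assms(3) y] by (simp add: N.minus_eq_zero_iff)
  then show "x = y" using assms(4)[OF M.minus_closed[OF x y]] x y by (simp add: M.minus_eq_zero_iff)
qed

lemma lhom_inverse:
  assumes "lmodule L M" "lmodule L N" "lhom L M N h" "bij_betw h (carrier M) (carrier N)"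
  shows "lhom L N M (the_inv_into (carrier M) h)"
proof -
  interpret M: lmod L M by unfold_locales fact
  interpret N: lmod L N by unfold_locales fact
  let ?i = "the_inv_into (carrier M) h"
  have inj: "inj_on h (carrier M)" and surj: "h ` carrier M = carrier N"
    using assms(4) unfolding bij_betw_def by auto
  have i_closed: "y \<in> carrier N \<Longrightarrow> ?i y \<in> carrier M" for y
    using the_inv_into_into[OF inj] surj by blast
  have h_i: "y \<in> carrier N \<Longrightarrow> h (?i y) = y" for y using f_the_inv_into_f[OF inj] surj by blast
  have i_h: "x \<in> carrier M \<Longrightarrow> ?i (h x) = x" for x using the_inv_into_f_f[OF inj] by blast
  show ?thesis unfolding lhom_def
  proof (intro conjI ballI)
    show "?i \<in> carrier N \<rightarrow> carrier M" using i_closed by auto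
  next
    fix x y assume "x \<in> carrier N" "y \<in> carrier N"
    then show "?i (x \<oplus>\<^bsub>N\<^esub> y) = ?i x \<oplus>\<^bsub>M\<^esub> ?i y"
      by (metis M.a_closed h_i i_closed i_h lhom_add[OF assms(3)])
  next
    fix a x assume "a \<in> carrier L" "x \<in> carrier N"
    then show "?i (a \<odot>\<^bsub>N\<^esub> x) = a \<odot>\<^bsub>M\<^esub> ?i x"
      by (metis M.smult_closed h_i i_closed i_h lhom_smult[OF assms(3)])
  qed
qed

lemma lhom_add_fun:
  assumes "lmodule L N" "lhom L M N h1" "lhom L M N h2"
  shows "lhom L M N (\<lambda>x. h1 x \<oplus>\<^bsub>N\<^esub> h2 x)"
proof -
  interpret N: lmod L N by unfold_locales fact
  show ?thesis using assms(2,3) unfolding lhom_def by (auto simp: Pi_def N.a_ac N.smult_r_distr)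
qed

lemma lhom_diff_fun:
  assumes "lmodule L N" "lhom L M N h1" "lhom L M N h2"
  shows "lhom L M N (\<lambda>x. h1 x \<ominus>\<^bsub>N\<^esub> h2 x)"
proof -
  interpret N: lmod L N by unfold_locales fact
  show ?thesis using assms(2,3) unfolding lhom_def
    by (auto simp: Pi_def N.minus_eq N.minus_add N.a_ac N.smult_r_distr N.smult_r_minus)
qed


section \<open>Module constructions\<close>

definition regular_module :: "'r ring \<Rightarrow> ('r, 'r) module" where
  "regular_module L = \<lparr>carrier = carrier L, monoid.mult = monoid.mult L, one = \<one>\<^bsub>L\<^esub>,
     ring.zero = \<zero>\<^bsub>L\<^esub>, ring.add = add L, smult = monoid.mult L\<rparr>"

lemma regular_module_simps [simp]:
  "carrier (regular_module L) = carrier L" "x \<oplus>\<^bsub>regular_module L\<^esub> y = x \<oplus>\<^bsub>L\<^esub> y"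
  "\<zero>\<^bsub>regular_module L\<^esub> = \<zero>\<^bsub>L\<^esub>" "a \<odot>\<^bsub>regular_module L\<^esub> x = a \<otimes>\<^bsub>L\<^esub> x"
  by (simp_all add: regular_module_def)

lemma lmodule_regular_module: assumes "ring L" shows "lmodule L (regular_module L)"
proof -
  interpret ring L by fact
  have "abelian_group (regular_module L)"
    by (rule abelian_groupI) (auto simp: a_ac intro: l_neg)
  then show ?thesis unfolding lmodule_def using assms by (auto simp: l_distr r_distr m_assoc)
qed

definition restrict_scalars :: "('k \<Rightarrow> 'r) \<Rightarrow> ('r, 'm) module \<Rightarrow> ('k, 'm) module" where
  "restrict_scalars phi M = \<lparr>carrier = carrier M, monoid.mult = monoid.mult M, one = \<one>\<^bsub>M\<^esub>,
     ring.zero = \<zero>\<^bsub>M\<^esub>, ring.add = add M, smult = (\<lambda>r x. phi r \<odot>\<^bsub>M\<^esub> x)\<rparr>"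

lemma restrict_scalars_simps [simp]:
  "carrier (restrict_scalars phi M) = carrier M"
  "x \<oplus>\<^bsub>restrict_scalars phi M\<^esub> y = x \<oplus>\<^bsub>M\<^esub> y"
  "\<zero>\<^bsub>restrict_scalars phi M\<^esub> = \<zero>\<^bsub>M\<^esub>"
  "r \<odot>\<^bsub>restrict_scalars phi M\<^esub> x = phi r \<odot>\<^bsub>M\<^esub> x"
  by (simp_all add: restrict_scalars_def)

lemma lmodule_restrict_scalars:
  assumes "lmodule L M" "ring R" "phi \<in> ring_hom R L"
  shows "lmodule R (restrict_scalars phi M)"
proof -
  interpret M: lmod L M by unfold_locales fact
  have "abelian_group (restrict_scalars phi M)"
    by (rule abelian_groupI) (auto simp: M.a_ac intro: M.l_neg)
  then show ?thesis
    using assms(2) ring_hom_closed[OF assms(3)] ring_hom_add[OF assms(3)]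
      ring_hom_mult[OF assms(3)] ring_hom_one[OF assms(3)]
    unfolding lmodule_def by (auto simp: M.smult_l_distr M.smult_r_distr M.smult_assoc)
qed

lemma lhom_restrict_scalars:
  "phi \<in> ring_hom R L \<Longrightarrow> lhom L M N h \<Longrightarrow>
    lhom R (restrict_scalars phi M) (restrict_scalars phi N) h"
  unfolding lhom_def by (auto simp: ring_hom_closed)

lemma submod_restrict_scalars:
  "phi \<in> ring_hom R L \<Longrightarrow> submod L M U \<Longrightarrow> submod R (restrict_scalars phi M) U"
  unfolding submod_def by (auto simp: ring_hom_closed)

definition power_module :: "('k, 'y) module \<Rightarrow> 'i set \<Rightarrow> ('k, 'i \<Rightarrow> 'y) module" where
  "power_module Y I = \<lparr>carrier = I \<rightarrow>\<^sub>E carrier Y, monoid.mult = (\<lambda>v w. undefined),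
     one = undefined, ring.zero = (\<lambda>i\<in>I. \<zero>\<^bsub>Y\<^esub>), ring.add = (\<lambda>v w. \<lambda>i\<in>I. v i \<oplus>\<^bsub>Y\<^esub> w i),
     smult = (\<lambda>r v. \<lambda>i\<in>I. r \<odot>\<^bsub>Y\<^esub> v i)\<rparr>"

lemma power_module_simps [simp]:
  "carrier (power_module Y I) = I \<rightarrow>\<^sub>E carrier Y"
  "v \<oplus>\<^bsub>power_module Y I\<^esub> w = (\<lambda>i\<in>I. v i \<oplus>\<^bsub>Y\<^esub> w i)"
  "\<zero>\<^bsub>power_module Y I\<^esub> = (\<lambda>i\<in>I. \<zero>\<^bsub>Y\<^esub>)"
  "r \<odot>\<^bsub>power_module Y I\<^esub> v = (\<lambda>i\<in>I. r \<odot>\<^bsub>Y\<^esub> v i)"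
  by (simp_all add: power_module_def)

lemma lmodule_power_module: assumes "lmodule R Y" shows "lmodule R (power_module Y I)"
proof -
  interpret Y: lmod R Y by unfold_locales fact
  have "abelian_group (power_module Y I)"
  proof (rule abelian_groupI)
    fix v assume v: "v \<in> carrier (power_module Y I)"
    have "(\<lambda>i\<in>I. \<zero>\<^bsub>Y\<^esub> \<oplus>\<^bsub>Y\<^esub> v i) = restrict v I"
      using v by (intro restrict_ext) (simp add: PiE_iff)
    then show "\<zero>\<^bsub>power_module Y I\<^esub> \<oplus>\<^bsub>power_module Y I\<^esub> v = v"
      using v by (simp add: PiE_restrict cong: restrict_cong)
    show "\<exists>w\<in>carrier (power_module Y I). w \<oplus>\<^bsub>power_module Y I\<^esub> v = \<zero>\<^bsub>power_module Y I\<^esub>"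
      using v by (intro bexI[of _ "\<lambda>i\<in>I. \<ominus>\<^bsub>Y\<^esub> v i"]) (auto simp: PiE_iff Y.l_neg cong: restrict_cong)
  next
    fix u v w assume "u \<in> carrier (power_module Y I)" "v \<in> carrier (power_module Y I)"
      "w \<in> carrier (power_module Y I)"
    then show "u \<oplus>\<^bsub>power_module Y I\<^esub> v \<oplus>\<^bsub>power_module Y I\<^esub> w
        = u \<oplus>\<^bsub>power_module Y I\<^esub> (v \<oplus>\<^bsub>power_module Y I\<^esub> w)"
      by (auto simp: PiE_iff Y.a_assoc cong: restrict_cong)
  next
    fix v w assume "v \<in> carrier (power_module Y I)" "w \<in> carrier (power_module Y I)"
    then show "v \<oplus>\<^bsub>power_module Y I\<^esub> w = w \<oplus>\<^bsub>power_module Y I\<^esub> v"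
      and "v \<oplus>\<^bsub>power_module Y I\<^esub> w \<in> carrier (power_module Y I)"
      by (auto simp: PiE_iff Y.a_comm cong: restrict_cong)
  qed auto
  moreover have "(\<lambda>i\<in>I. a \<odot>\<^bsub>Y\<^esub> v i) \<in> I \<rightarrow>\<^sub>E carrier Y"
    if "a \<in> carrier R" "v \<in> I \<rightarrow>\<^sub>E carrier Y" for a v
    using that by (simp add: PiE_iff)
  moreover have "(\<lambda>i\<in>I. (a \<oplus>\<^bsub>R\<^esub> b) \<odot>\<^bsub>Y\<^esub> v i)
      = (\<lambda>i\<in>I. (\<lambda>i\<in>I. a \<odot>\<^bsub>Y\<^esub> v i) i \<oplus>\<^bsub>Y\<^esub> (\<lambda>i\<in>I. b \<odot>\<^bsub>Y\<^esub> v i) i)"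
    if "a \<in> carrier R" "b \<in> carrier R" "v \<in> I \<rightarrow>\<^sub>E carrier Y" for a b v
    using that by (intro restrict_ext) (simp add: PiE_iff Y.smult_l_distr)
  moreover have "(\<lambda>i\<in>I. a \<odot>\<^bsub>Y\<^esub> (\<lambda>i\<in>I. v i \<oplus>\<^bsub>Y\<^esub> w i) i)
      = (\<lambda>i\<in>I. (\<lambda>i\<in>I. a \<odot>\<^bsub>Y\<^esub> v i) i \<oplus>\<^bsub>Y\<^esub> (\<lambda>i\<in>I. a \<odot>\<^bsub>Y\<^esub> w i) i)"
    if "a \<in> carrier R" "v \<in> I \<rightarrow>\<^sub>E carrier Y" "w \<in> I \<rightarrow>\<^sub>E carrier Y" for a v w
    using that by (intro restrict_ext) (simp add: PiE_iff Y.smult_r_distr)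
  moreover have "(\<lambda>i\<in>I. (a \<otimes>\<^bsub>R\<^esub> b) \<odot>\<^bsub>Y\<^esub> v i) = (\<lambda>i\<in>I. a \<odot>\<^bsub>Y\<^esub> (\<lambda>i\<in>I. b \<odot>\<^bsub>Y\<^esub> v i) i)"
    if "a \<in> carrier R" "b \<in> carrier R" "v \<in> I \<rightarrow>\<^sub>E carrier Y" for a b v
    using that by (intro restrict_ext) (simp add: PiE_iff Y.smult_assoc)
  moreover have "(\<lambda>i\<in>I. \<one>\<^bsub>R\<^esub> \<odot>\<^bsub>Y\<^esub> v i) = v" if "v \<in> I \<rightarrow>\<^sub>E carrier Y" for v
  proof -
    have "(\<lambda>i\<in>I. \<one>\<^bsub>R\<^esub> \<odot>\<^bsub>Y\<^esub> v i) = restrict v I"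
      using that by (intro restrict_ext) (simp add: PiE_iff)
    then show ?thesis using that by (simp add: PiE_restrict)
  qed
  ultimately show ?thesis
    using Y.L.ring_axioms unfolding lmodule_def by simp
qed

lemma restrict_scalars_power_module:
  "restrict_scalars phi (power_module M I) = power_module (restrict_scalars phi M) I"
  by (simp add: restrict_scalars_def power_module_def)

definition lincomb :: "('r, 'm) module \<Rightarrow> 'i set \<Rightarrow> ('i \<Rightarrow> 'm) \<Rightarrow> ('i \<Rightarrow> 'r) \<Rightarrow> 'm" where
  "lincomb M I gen c = finsum M (\<lambda>i. c i \<odot>\<^bsub>M\<^esub> gen i) I"

definition spanned_by :: "'r ring \<Rightarrow> ('r, 'm) module \<Rightarrow> 'i set \<Rightarrow> ('i \<Rightarrow> 'm) \<Rightarrow> bool" where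
  "spanned_by L M I gen \<longleftrightarrow> finite I \<and> gen \<in> I \<rightarrow> carrier M \<and>
     (\<forall>x\<in>carrier M. \<exists>c\<in>I \<rightarrow> carrier L. x = lincomb M I gen c)"

lemma fg_lmodule_spanned_by:
  assumes "fg_lmodule L M" obtains S where "spanned_by L M S (\<lambda>x. x)"
proof -
  obtain S where "finite S" "S \<subseteq> carrier M"
    "\<forall>x\<in>carrier M. \<exists>c. c \<in> S \<rightarrow> carrier L \<and> x = finsum M (\<lambda>s. c s \<odot>\<^bsub>M\<^esub> s) S"
    using assms unfolding fg_lmodule_def by blast
  then have "spanned_by L M S (\<lambda>x. x)"
    unfolding spanned_by_def lincomb_def by (auto simp: Bex_def)
  then show thesis by (rule that)
qed

context lmod
begin

lemma lincomb_closed: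
  "gen \<in> I \<rightarrow> carrier M \<Longrightarrow> c \<in> I \<rightarrow> carrier L \<Longrightarrow> lincomb M I gen c \<in> carrier M"
  unfolding lincomb_def by (auto intro!: finsum_closed)

lemma lincomb_cong:
  "gen \<in> I \<rightarrow> carrier M \<Longrightarrow> c \<in> I \<rightarrow> carrier L \<Longrightarrow> (\<And>i. i \<in> I \<Longrightarrow> c i = d i) \<Longrightarrow>
    lincomb M I gen c = lincomb M I gen d"
  unfolding lincomb_def by (rule finsum_cong') (auto simp: Pi_iff)

lemma lhom_lincomb:
  assumes "finite I" "gen \<in> I \<rightarrow> carrier M"
  shows "lhom L (power_module (regular_module L) I) M (lincomb M I gen)"
  unfolding lhom_def
proof (intro conjI ballI)
  show "lincomb M I gen \<in> carrier (power_module (regular_module L) I) \<rightarrow> carrier M"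
    using assms(2) by (auto intro: lincomb_closed)
next
  fix v w assume v: "v \<in> carrier (power_module (regular_module L) I)"
    and w: "w \<in> carrier (power_module (regular_module L) I)"
  have "lincomb M I gen (v \<oplus>\<^bsub>power_module (regular_module L) I\<^esub> w)
      = finsum M (\<lambda>i. v i \<odot> gen i \<oplus> w i \<odot> gen i) I"
    unfolding lincomb_def using v w assms(2)
    by (intro finsum_cong') (auto simp: smult_l_distr PiE_iff Pi_iff)
  also have "\<dots> = lincomb M I gen v \<oplus> lincomb M I gen w"
    unfolding lincomb_def using v w assms(2) by (intro finsum_addf) (auto simp: PiE_iff Pi_iff)
  finally show "lincomb M I gen (v \<oplus>\<^bsub>power_module (regular_module L) I\<^esub> w)
      = lincomb M I gen v \<oplus> lincomb M I gen w" .
next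
  fix a v assume a: "a \<in> carrier L" and v: "v \<in> carrier (power_module (regular_module L) I)"
  have "lincomb M I gen (a \<odot>\<^bsub>power_module (regular_module L) I\<^esub> v)
      = finsum M (\<lambda>i. a \<odot> (v i \<odot> gen i)) I"
    unfolding lincomb_def using a v assms(2)
    by (intro finsum_cong') (auto simp: smult_assoc PiE_iff Pi_iff)
  also have "\<dots> = a \<odot> lincomb M I gen v"
    unfolding lincomb_def using a v assms by (intro finsum_smult[symmetric]) (auto simp: PiE_iff Pi_iff)
  finally show "lincomb M I gen (a \<odot>\<^bsub>power_module (regular_module L) I\<^esub> v)
      = a \<odot> lincomb M I gen v" .
qed

lemma lincomb_surj:
  assumes "spanned_by L M I gen"
  shows "lincomb M I gen ` carrier (power_module (regular_module L) I) = carrier M"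
proof
  show "lincomb M I gen ` carrier (power_module (regular_module L) I) \<subseteq> carrier M"
    using assms unfolding spanned_by_def by (auto intro: lincomb_closed)
next
  show "carrier M \<subseteq> lincomb M I gen ` carrier (power_module (regular_module L) I)"
  proof
    fix x assume "x \<in> carrier M"
    then obtain c where c: "c \<in> I \<rightarrow> carrier L" "x = lincomb M I gen c"
      using assms unfolding spanned_by_def by blast
    then have "x = lincomb M I gen (restrict c I)"
      using assms unfolding spanned_by_def by (auto intro: lincomb_cong)
    then show "x \<in> lincomb M I gen ` carrier (power_module (regular_module L) I)" using c by auto
  qed
qed

end

lemma lhom_lincomb_image:
  assumes "lmodule L M" "lmodule L N" "lhom L M N h" "finite I" "gen \<in> I \<rightarrow> carrier M"
    "c \<in> I \<rightarrow> carrier L"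
  shows "h (lincomb M I gen c) = lincomb N I (\<lambda>i. h (gen i)) c"
proof -
  interpret M: lmod L M by unfold_locales fact
  interpret N: lmod L N by unfold_locales fact
  have "h (lincomb M I gen c) = finsum N (\<lambda>i. h (c i \<odot>\<^bsub>M\<^esub> gen i)) I"
    unfolding lincomb_def using assms by (intro lhom_finsum) auto
  also have "\<dots> = lincomb N I (\<lambda>i. h (gen i)) c"
    unfolding lincomb_def using assms(5,6)
    by (intro N.finsum_cong') (auto simp: lhom_smult[OF assms(3)] Pi_iff intro!: lhom_closed[OF assms(3)])
  finally show ?thesis .
qed

lemma lhom_eq_on_generators:
  assumes "lmodule L M" "lmodule L N" "spanned_by L M I gen" "lhom L M N h1" "lhom L M N h2"
    "\<And>i. i \<in> I \<Longrightarrow> h1 (gen i) = h2 (gen i)" "x \<in> carrier M"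
  shows "h1 x = h2 x"
proof -
  interpret N: lmod L N by unfold_locales fact
  obtain c where c: "c \<in> I \<rightarrow> carrier L" "x = lincomb M I gen c"
    using assms(3,7) unfolding spanned_by_def by blast
  have I: "finite I" "gen \<in> I \<rightarrow> carrier M" using assms(3) unfolding spanned_by_def by auto
  show ?thesis
    unfolding c(2) lhom_lincomb_image[OF assms(1,2,4) I c(1)] lhom_lincomb_image[OF assms(1,2,5) I c(1)]
    using assms(6) c(1) I(2) lhom_closed[OF assms(5)] unfolding lincomb_def
    by (intro N.finsum_cong') (auto simp: Pi_iff)
qed

lemma spanned_by_image:
  assumes "lmodule L M" "lmodule L N" "spanned_by L M I gen" "lhom L M N h" "h ` carrier M = carrier N"
  shows "spanned_by L N I (\<lambda>i. h (gen i))"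
  unfolding spanned_by_def
proof (intro conjI ballI)
  show "finite I" "(\<lambda>i. h (gen i)) \<in> I \<rightarrow> carrier N"
    using assms(3) lhom_closed[OF assms(4)] unfolding spanned_by_def by auto
next
  fix y assume "y \<in> carrier N"
  then obtain x where x: "x \<in> carrier M" "y = h x" using assms(5) by auto
  then obtain c where c: "c \<in> I \<rightarrow> carrier L" "x = lincomb M I gen c"
    using assms(3) unfolding spanned_by_def by blast
  then show "\<exists>c\<in>I \<rightarrow> carrier L. y = lincomb N I (\<lambda>i. h (gen i)) c"
    using x assms(3) lhom_lincomb_image[OF assms(1,2,4)] unfolding spanned_by_def by blast
qed

section \<open>Artinian modules\<close>

definition artinian_module :: "'k ring \<Rightarrow> ('k, 'y) module \<Rightarrow> bool" where
  "artinian_module R Y \<longleftrightarrow>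
     (\<forall>N :: nat \<Rightarrow> 'y set. (\<forall>n. submod R Y (N n) \<and> N (Suc n) \<subseteq> N n) \<longrightarrow> (\<exists>m. \<forall>n\<ge>m. N n = N m))"

lemma artinian_moduleD:
  "artinian_module R Y \<Longrightarrow> (\<And>n. submod R Y (N n)) \<Longrightarrow> (\<And>n. N (Suc n) \<subseteq> N n) \<Longrightarrow>
    \<exists>m. \<forall>n\<ge>m. N n = N m"
  unfolding artinian_module_def by blast

lemma artinian_regular_module:
  assumes "artinian_cring R" shows "artinian_module R (regular_module R)"
  unfolding artinian_module_def
proof (intro allI impI)
  fix N assume chain: "\<forall>n. submod R (regular_module R) (N n) \<and> N (Suc n) \<subseteq> N n"
  interpret cring R using assms unfolding artinian_cring_def by auto
  have "ideal (N n) R" for n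
  proof -
    have sub: "N n \<subseteq> carrier R" and zero: "\<zero>\<^bsub>R\<^esub> \<in> N n"
      and add: "\<And>x y. x \<in> N n \<Longrightarrow> y \<in> N n \<Longrightarrow> x \<oplus>\<^bsub>R\<^esub> y \<in> N n"
      and mult: "\<And>r x. r \<in> carrier R \<Longrightarrow> x \<in> N n \<Longrightarrow> r \<otimes>\<^bsub>R\<^esub> x \<in> N n"
      using chain unfolding submod_def by auto
    have neg: "x \<in> N n \<Longrightarrow> \<ominus>\<^bsub>R\<^esub> x \<in> N n" for x
      using mult[of "\<ominus>\<^bsub>R\<^esub> \<one>\<^bsub>R\<^esub>" x] sub by (metis l_minus l_one one_closed a_inv_closed subsetD)
    then show ?thesis
    proof (intro idealI ring_axioms)
      show "subgroup (N n) (add_monoid R)"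
        by (rule subgroup.intro) (use sub zero add neg in \<open>auto simp: a_inv_def\<close>)
    next
      fix a x assume "a \<in> N n" "x \<in> carrier R"
      then show "x \<otimes>\<^bsub>R\<^esub> a \<in> N n" and "a \<otimes>\<^bsub>R\<^esub> x \<in> N n"
        using mult sub by (auto simp: m_comm[of a x] subset_iff)
    qed
  qed
  then show "\<exists>m. \<forall>n\<ge>m. N n = N m" using assms chain unfolding artinian_cring_def by blast
qed

lemma artinian_module_surj_image:
  assumes "lmodule R M" "lmodule R Q" "artinian_module R M" "lhom R M Q T" "T ` carrier M = carrier Q"
  shows "artinian_module R Q"
  unfolding artinian_module_def
proof (intro allI impI)
  fix N assume chain: "\<forall>n. submod R Q (N n) \<and> N (Suc n) \<subseteq> N n"
  interpret M: lmod R M by unfold_locales fact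
  define P where "P n = {v \<in> carrier M. T v \<in> N n}" for n
  have "submod R M (P n)" for n
  proof -
    have "submod R Q (N n)" using chain by blast
    then show ?thesis
      unfolding submod_def P_def
      using lhom_zero[OF assms(1,2,4)] lhom_add[OF assms(4)] lhom_smult[OF assms(4)] by auto
  qed
  moreover have "P (Suc n) \<subseteq> P n" for n using chain unfolding P_def by auto
  ultimately obtain m where m: "\<forall>n\<ge>m. P n = P m" using artinian_moduleD[OF assms(3)] by meson
  have "N n = T ` P n" for n
  proof
    show "N n \<subseteq> T ` P n"
    proof
      fix z assume z: "z \<in> N n"
      then have "z \<in> carrier Q" using chain unfolding submod_def by blast
      then obtain v where "v \<in> carrier M" "z = T v" using assms(5) by blast
      then show "z \<in> T ` P n" using z unfolding P_def by blast
    qed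
  qed (auto simp: P_def)
  then show "\<exists>m. \<forall>n\<ge>m. N n = N m" using m by metis
qed

lemma power_module_a_inv:
  assumes "lmodule R Y" "v \<in> I \<rightarrow>\<^sub>E carrier Y"
  shows "\<ominus>\<^bsub>power_module Y I\<^esub> v = (\<lambda>i\<in>I. \<ominus>\<^bsub>Y\<^esub> v i)"
proof -
  interpret Y: lmod R Y by unfold_locales fact
  interpret P: lmod R "power_module Y I" by unfold_locales (rule lmodule_power_module[OF assms(1)])
  have "(\<lambda>i\<in>I. \<ominus>\<^bsub>Y\<^esub> v i) \<oplus>\<^bsub>power_module Y I\<^esub> v = \<zero>\<^bsub>power_module Y I\<^esub>"
    unfolding power_module_simps using assms(2) by (intro restrict_ext) (simp add: PiE_iff Y.l_neg)
  then show ?thesis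
    using assms(2) by (intro P.minus_equality) (simp_all add: PiE_iff)
qed

lemma submod_power_coordinate:
  assumes "submod R (power_module Y J) N" "s \<in> J"
  shows "submod R Y ((\<lambda>v. v s) ` N)"
proof -
  have N: "N \<subseteq> J \<rightarrow>\<^sub>E carrier Y" "(\<lambda>i\<in>J. \<zero>\<^bsub>Y\<^esub>) \<in> N"
    "\<And>v w. v \<in> N \<Longrightarrow> w \<in> N \<Longrightarrow> (\<lambda>i\<in>J. v i \<oplus>\<^bsub>Y\<^esub> w i) \<in> N"
    "\<And>r v. r \<in> carrier R \<Longrightarrow> v \<in> N \<Longrightarrow> (\<lambda>i\<in>J. r \<odot>\<^bsub>Y\<^esub> v i) \<in> N"
    using assms(1) unfolding submod_def by auto
  show ?thesis
    unfolding submod_def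
  proof (intro conjI ballI)
    show "(\<lambda>v. v s) ` N \<subseteq> carrier Y" using N(1) assms(2) by (auto simp: PiE_iff)
    show "\<zero>\<^bsub>Y\<^esub> \<in> (\<lambda>v. v s) ` N"
      using N(2) assms(2) by (intro image_eqI[where x = "\<lambda>i\<in>J. \<zero>\<^bsub>Y\<^esub>"]) simp_all
  next
    fix x y assume "x \<in> (\<lambda>v. v s) ` N" "y \<in> (\<lambda>v. v s) ` N"
    then obtain v w where "v \<in> N" "w \<in> N" "x = v s" "y = w s" by blast
    then show "x \<oplus>\<^bsub>Y\<^esub> y \<in> (\<lambda>v. v s) ` N"
      using N(3) assms(2) by (intro image_eqI[where x = "\<lambda>i\<in>J. v i \<oplus>\<^bsub>Y\<^esub> w i"]) simp_all
  next
    fix r x assume "r \<in> carrier R" "x \<in> (\<lambda>v. v s) ` N"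
    then obtain v where "v \<in> N" "x = v s" by blast
    then show "r \<odot>\<^bsub>Y\<^esub> x \<in> (\<lambda>v. v s) ` N"
      using N(4) assms(2) \<open>r \<in> carrier R\<close>
      by (intro image_eqI[where x = "\<lambda>i\<in>J. r \<odot>\<^bsub>Y\<^esub> v i"]) simp_all
  qed
qed

lemma submod_power_kernel_restrict:
  assumes "lmodule R Y" "submod R (power_module Y (insert s I)) N"
  shows "submod R (power_module Y I) ((\<lambda>v. restrict v I) ` {v \<in> N. v s = \<zero>\<^bsub>Y\<^esub>})"
  unfolding submod_def
proof (intro conjI ballI)
  interpret Y: lmod R Y by unfold_locales fact
  show "(\<lambda>v. restrict v I) ` {v \<in> N. v s = \<zero>\<^bsub>Y\<^esub>} \<subseteq> carrier (power_module Y I)"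
    using assms(2) unfolding submod_def by (force simp: PiE_iff)
  show "\<zero>\<^bsub>power_module Y I\<^esub> \<in> (\<lambda>v. restrict v I) ` {v \<in> N. v s = \<zero>\<^bsub>Y\<^esub>}"
    using assms(2) unfolding submod_def
    by (force intro: image_eqI[where x = "\<lambda>i\<in>insert s I. \<zero>\<^bsub>Y\<^esub>"])
next
  interpret Y: lmod R Y by unfold_locales fact
  fix x y assume "x \<in> (\<lambda>v. restrict v I) ` {v \<in> N. v s = \<zero>\<^bsub>Y\<^esub>}"
    "y \<in> (\<lambda>v. restrict v I) ` {v \<in> N. v s = \<zero>\<^bsub>Y\<^esub>}"
  then obtain v w where vw: "v \<in> N" "w \<in> N" "v s = \<zero>\<^bsub>Y\<^esub>" "w s = \<zero>\<^bsub>Y\<^esub>"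
    "x = restrict v I" "y = restrict w I" by blast
  then show "x \<oplus>\<^bsub>power_module Y I\<^esub> y \<in> (\<lambda>v. restrict v I) ` {v \<in> N. v s = \<zero>\<^bsub>Y\<^esub>}"
    using assms(2) unfolding submod_def
    by (intro image_eqI[where x = "\<lambda>i\<in>insert s I. v i \<oplus>\<^bsub>Y\<^esub> w i"]) (auto cong: restrict_cong)
next
  interpret Y: lmod R Y by unfold_locales fact
  fix r x assume r: "r \<in> carrier R" and "x \<in> (\<lambda>v. restrict v I) ` {v \<in> N. v s = \<zero>\<^bsub>Y\<^esub>}"
  then obtain v where v: "v \<in> N" "v s = \<zero>\<^bsub>Y\<^esub>" "x = restrict v I" by blast
  then show "r \<odot>\<^bsub>power_module Y I\<^esub> x \<in> (\<lambda>v. restrict v I) ` {v \<in> N. v s = \<zero>\<^bsub>Y\<^esub>}"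
    using assms(2) r unfolding submod_def
    by (intro image_eqI[where x = "\<lambda>i\<in>insert s I. r \<odot>\<^bsub>Y\<^esub> v i"]) (auto cong: restrict_cong)
qed

lemma submod_power_eqI:
  assumes Y: "lmodule R Y"
    and N1: "submod R (power_module Y (insert s I)) N1" and N2: "submod R (power_module Y (insert s I)) N2"
    and "N2 \<subseteq> N1" and coord: "(\<lambda>v. v s) ` N1 = (\<lambda>v. v s) ` N2"
    and ker: "(\<lambda>v. restrict v I) ` {v \<in> N1. v s = \<zero>\<^bsub>Y\<^esub>} = (\<lambda>v. restrict v I) ` {v \<in> N2. v s = \<zero>\<^bsub>Y\<^esub>}"
  shows "N1 = N2"
proof
  interpret Y: lmod R Y by unfold_locales fact
  interpret P: lmod R "power_module Y (insert s I)" by unfold_locales (rule lmodule_power_module[OF Y])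
  show "N1 \<subseteq> N2"
  proof
    fix x assume x: "x \<in> N1"
    have "x s \<in> (\<lambda>v. v s) ` N2" using x coord by blast
    then obtain y where y: "y \<in> N2" "y s = x s" by (auto elim!: imageE)
    have carr: "x \<in> carrier (power_module Y (insert s I))" "y \<in> carrier (power_module Y (insert s I))"
      using x y N1 N2 P.submod_closed by auto
    define d where "d = x \<ominus>\<^bsub>power_module Y (insert s I)\<^esub> y"
    have d_N1: "d \<in> N1" unfolding d_def using P.submod_minus[OF N1 x] y \<open>N2 \<subseteq> N1\<close> by blast
    have d_eq: "d = (\<lambda>i\<in>insert s I. x i \<ominus>\<^bsub>Y\<^esub> y i)"
      using carr unfolding d_def a_minus_def power_module_a_inv[OF Y carr(2)[simplified]]
      by (auto simp: PiE_iff cong: restrict_cong)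
    have "d s = \<zero>\<^bsub>Y\<^esub>" using carr y(2) by (simp add: d_eq PiE_iff Y.r_neg Y.minus_eq)
    then have "restrict d I \<in> (\<lambda>v. restrict v I) ` {v \<in> N2. v s = \<zero>\<^bsub>Y\<^esub>}"
      using d_N1 ker by blast
    then obtain w where w: "w \<in> N2" "w s = \<zero>\<^bsub>Y\<^esub>" "restrict d I = restrict w I"
      by (auto simp: image_iff)
    have "w = d"
    proof (rule PiE_ext)
      show "w \<in> insert s I \<rightarrow>\<^sub>E carrier Y" using w N2 P.submod_closed by auto
      show "d \<in> insert s I \<rightarrow>\<^sub>E carrier Y" using d_N1 N1 P.submod_closed by auto
      show "w i = d i" if "i \<in> insert s I" for i
        using that w \<open>d s = \<zero>\<^bsub>Y\<^esub>\<close> by (metis insertE restrict_apply')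
    qed
    then have "d \<oplus>\<^bsub>power_module Y (insert s I)\<^esub> y \<in> N2"
      using w y N2 unfolding submod_def by blast
    moreover have "d \<oplus>\<^bsub>power_module Y (insert s I)\<^esub> y = x"
      using carr unfolding d_def by (rule P.minus_add_cancel)
    ultimately show "x \<in> N2" by simp
  qed
qed fact

lemma artinian_power_module:
  assumes "lmodule R Y" "artinian_module R Y" "finite I"
  shows "artinian_module R (power_module Y I)"
  using assms(3)
proof (induct I rule: finite_induct)
  case empty
  have "submod R (power_module Y {}) N \<Longrightarrow> N = {\<lambda>_. undefined}" for N
    unfolding submod_def by auto
  then show ?case unfolding artinian_module_def by metis
next
  case (insert s I)
  show ?case unfolding artinian_module_def
  proof (intro allI impI)
    fix N assume chain: "\<forall>n. submod R (power_module Y (insert s I)) (N n) \<and> N (Suc n) \<subseteq> N n"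
    define P where "P n = (\<lambda>v. v s) ` N n" for n
    define Q where "Q n = (\<lambda>v. restrict v I) ` {v \<in> N n. v s = \<zero>\<^bsub>Y\<^esub>}" for n
    have "submod R Y (P n)" for n
      unfolding P_def using chain by (blast intro: submod_power_coordinate)
    moreover have "P (Suc n) \<subseteq> P n" for n unfolding P_def using chain by blast
    ultimately obtain m1 where m1: "\<forall>n\<ge>m1. P n = P m1" using artinian_moduleD[OF assms(2)] by meson
    have "submod R (power_module Y I) (Q n)" for n
      unfolding Q_def using chain by (blast intro: submod_power_kernel_restrict[OF assms(1)])
    moreover have "Q (Suc n) \<subseteq> Q n" for n unfolding Q_def using chain by blast
    ultimately obtain m2 where m2: "\<forall>n\<ge>m2. Q n = Q m2" using artinian_moduleD[OF insert(3)] by meson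
    have "N n = N (max m1 m2)" if "n \<ge> max m1 m2" for n
    proof (rule sym, rule submod_power_eqI[OF assms(1)])
      show "N n \<subseteq> N (max m1 m2)" using that chain lift_Suc_antimono_le[of N] by blast
      show "(\<lambda>v. v s) ` N (max m1 m2) = (\<lambda>v. v s) ` N n"
        using m1[rule_format, of n] m1[rule_format, of "max m1 m2"] that unfolding P_def by simp
      show "(\<lambda>v. restrict v I) ` {v \<in> N (max m1 m2). v s = \<zero>\<^bsub>Y\<^esub>}
          = (\<lambda>v. restrict v I) ` {v \<in> N n. v s = \<zero>\<^bsub>Y\<^esub>}"
        using m2[rule_format, of n] m2[rule_format, of "max m1 m2"] that unfolding Q_def by simp
    qed (use chain in blast)+
    then show "\<exists>m. \<forall>n\<ge>m. N n = N m" by blast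
  qed
qed

lemma finsum_restrict_scalars [simp]: "finsum (restrict_scalars phi M) f I = finsum M f I"
  by (simp add: finsum_def finprod_def restrict_scalars_def)

lemma finsum_regular_module [simp]: "finsum (regular_module L) f I = finsum L f I"
  by (simp add: finsum_def finprod_def regular_module_def)

text \<open>The algebra is a quotient of \<open>R\<^sup>S\<close> and the module a quotient of \<open>L\<^sup>I\<close>; the
  descending chain condition passes to finite powers and to quotients.\<close>

lemma artinian_fg_module:
  assumes aa: "artin_algebra R phi L" and M: "lmodule L M" and span: "spanned_by L M I gen"
  shows "artinian_module R (restrict_scalars phi M)"
proof -
  have art: "artinian_cring R" and cr: "cring R" and L: "ring L" and phi: "phi \<in> ring_hom R L"
    using aa unfolding artin_algebra_def artinian_cring_def by auto
  obtain S where S: "finite S" "S \<subseteq> carrier L"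
    "\<forall>x\<in>carrier L. \<exists>c. c \<in> S \<rightarrow> carrier R \<and> x = finsum L (\<lambda>s. phi (c s) \<otimes>\<^bsub>L\<^esub> s) S"
    using aa unfolding artin_algebra_def by auto
  have R: "ring R" using cr cring.axioms(1) by blast
  have RR: "lmodule R (regular_module R)" by (rule lmodule_regular_module[OF R])
  let ?LR = "restrict_scalars phi (regular_module L)"
  have LR: "lmodule R ?LR" by (rule lmodule_restrict_scalars[OF lmodule_regular_module[OF L] R phi])
  interpret LR: lmod R ?LR by unfold_locales (rule LR)
  have span_LR: "spanned_by R ?LR S (\<lambda>s. s)"
    using S unfolding spanned_by_def lincomb_def by auto
  then have gen_LR: "(\<lambda>s. s) \<in> S \<rightarrow> carrier ?LR" unfolding spanned_by_def by blast
  have "artinian_module R ?LR"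
    by (rule artinian_module_surj_image[OF lmodule_power_module[OF RR] LR
          artinian_power_module[OF RR artinian_regular_module[OF art] S(1)]
          LR.lhom_lincomb[OF S(1) gen_LR] LR.lincomb_surj[OF span_LR]])
  then have art_LI: "artinian_module R (restrict_scalars phi (power_module (regular_module L) I))"
    unfolding restrict_scalars_power_module
    using artinian_power_module[OF LR] span unfolding spanned_by_def by blast
  have lhom_LI: "lhom R (restrict_scalars phi (power_module (regular_module L) I))
      (restrict_scalars phi M) (lincomb M I gen)"
    using lhom_restrict_scalars[OF phi lmod.lhom_lincomb[OF lmod.intro[OF M]]] span
    unfolding spanned_by_def by blast
  have surj_LI: "lincomb M I gen ` carrier (restrict_scalars phi (power_module (regular_module L) I))
      = carrier (restrict_scalars phi M)"
    unfolding restrict_scalars_simps(1) by (rule lmod.lincomb_surj[OF lmod.intro[OF M] span])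
  show ?thesis
    by (rule artinian_module_surj_image[OF lmodule_restrict_scalars[OF _ R phi]
          lmodule_restrict_scalars[OF M R phi] art_LI lhom_LI surj_LI])
      (rule lmodule_power_module[OF lmodule_regular_module[OF L]])
qed

section \<open>Endomorphisms of finitely generated modules over an Artin algebra\<close>

lemma lhom_smult_fun:
  assumes "lmodule L N" "lhom L M N h" "a \<in> carrier L" "\<forall>b\<in>carrier L. a \<otimes>\<^bsub>L\<^esub> b = b \<otimes>\<^bsub>L\<^esub> a"
  shows "lhom L M N (\<lambda>x. a \<odot>\<^bsub>N\<^esub> h x)"
proof -
  interpret N: lmod L N by unfold_locales fact
  have "a \<odot>\<^bsub>N\<^esub> (b \<odot>\<^bsub>N\<^esub> y) = b \<odot>\<^bsub>N\<^esub> (a \<odot>\<^bsub>N\<^esub> y)" if "b \<in> carrier L" "y \<in> carrier N" for b y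
    using that assms(3,4) by (metis N.smult_assoc)
  then show ?thesis
    using assms(2,3) unfolding lhom_def by (auto simp: Pi_def N.smult_r_distr)
qed

definition commuting_endos :: "'r ring \<Rightarrow> ('r, 'm) module \<Rightarrow> ('m \<Rightarrow> 'm) \<Rightarrow> ('m \<Rightarrow> 'm) set" where
  "commuting_endos L M \<psi> = {e. lhom L M M e \<and> (\<forall>x\<in>carrier M. e (\<psi> x) = \<psi> (e x))}"

text \<open>Closure under scalars uses that \<open>phi\<close> maps into the centre of \<open>L\<close>.\<close>

lemma submod_commuting_endos_values:
  assumes aa: "artin_algebra R phi L" and M: "lmodule L M" and \<psi>: "lhom L M M \<psi>"
    and v: "v \<in> I \<rightarrow> carrier M"
  shows "submod R (power_module (restrict_scalars phi M) I) ((\<lambda>e. \<lambda>i\<in>I. e (v i)) ` commuting_endos L M \<psi>)"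
  unfolding submod_def
proof (intro conjI ballI)
  interpret M: lmod L M by unfold_locales fact
  show "(\<lambda>e. \<lambda>i\<in>I. e (v i)) ` commuting_endos L M \<psi> \<subseteq> carrier (power_module (restrict_scalars phi M) I)"
    using v unfolding commuting_endos_def by (auto simp: lhom_closed Pi_iff)
  have "(\<lambda>x. \<zero>\<^bsub>M\<^esub>) \<in> commuting_endos L M \<psi>"
    unfolding commuting_endos_def lhom_def using lhom_zero[OF M M \<psi>] by auto
  then show "\<zero>\<^bsub>power_module (restrict_scalars phi M) I\<^esub> \<in> (\<lambda>e. \<lambda>i\<in>I. e (v i)) ` commuting_endos L M \<psi>"
    by force
next
  interpret M: lmod L M by unfold_locales fact
  fix x y assume "x \<in> (\<lambda>e. \<lambda>i\<in>I. e (v i)) ` commuting_endos L M \<psi>"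
    "y \<in> (\<lambda>e. \<lambda>i\<in>I. e (v i)) ` commuting_endos L M \<psi>"
  then obtain e1 e2 where e: "e1 \<in> commuting_endos L M \<psi>" "e2 \<in> commuting_endos L M \<psi>"
    and xy: "x = (\<lambda>i\<in>I. e1 (v i))" "y = (\<lambda>i\<in>I. e2 (v i))" by blast
  have "(\<lambda>x. e1 x \<oplus>\<^bsub>M\<^esub> e2 x) \<in> commuting_endos L M \<psi>"
    using e lhom_add_fun[OF M] unfolding commuting_endos_def
    by (auto simp: lhom_add[OF \<psi>] lhom_closed)
  then show "x \<oplus>\<^bsub>power_module (restrict_scalars phi M) I\<^esub> y \<in> (\<lambda>e. \<lambda>i\<in>I. e (v i)) ` commuting_endos L M \<psi>"
    unfolding xy by (force cong: restrict_cong)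
next
  interpret M: lmod L M by unfold_locales fact
  fix r x assume r: "r \<in> carrier R" and "x \<in> (\<lambda>e. \<lambda>i\<in>I. e (v i)) ` commuting_endos L M \<psi>"
  then obtain e where e: "e \<in> commuting_endos L M \<psi>" and x: "x = (\<lambda>i\<in>I. e (v i))" by blast
  have phi: "phi r \<in> carrier L" "\<forall>b\<in>carrier L. phi r \<otimes>\<^bsub>L\<^esub> b = b \<otimes>\<^bsub>L\<^esub> phi r"
    using aa r unfolding artin_algebra_def by (auto simp: ring_hom_closed)
  have "(\<lambda>x. phi r \<odot>\<^bsub>M\<^esub> e x) \<in> commuting_endos L M \<psi>"
    using e lhom_smult_fun[OF M _ phi] unfolding commuting_endos_def
    by (auto simp: lhom_smult[OF \<psi> phi(1)] lhom_closed)
  then show "r \<odot>\<^bsub>power_module (restrict_scalars phi M) I\<^esub> x \<in> (\<lambda>e. \<lambda>i\<in>I. e (v i)) ` commuting_endos L M \<psi>"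
    unfolding x by (force cong: restrict_cong)
qed

text \<open>The values of the endomorphisms commuting with \<open>\<psi>\<close> at \<open>\<psi>\<^sup>n(gen)\<close> form a descending
  chain of submodules of the artinian module \<open>M\<^sup>I\<close>; once it is stable, \<open>\<psi>\<^sup>m = \<psi>\<^sup>m\<^sup>+\<^sup>1 e\<close> for some such \<open>e\<close>, and surjectivity turns this into
  a left inverse of \<open>\<psi>\<close> on the kernel.\<close>

lemma surj_endo_inj:
  assumes aa: "artin_algebra R phi L" and M: "lmodule L M" and span: "spanned_by L M I gen"
    and \<psi>: "lhom L M M \<psi>" and surj: "\<psi> ` carrier M = carrier M"
  shows "inj_on \<psi> (carrier M)"
proof -
  interpret M: lmod L M by unfold_locales fact
  let ?E = "commuting_endos L M \<psi>"
  define N where "N n = (\<lambda>e. \<lambda>i\<in>I. e ((\<psi> ^^ n) (gen i))) ` ?E" for n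
  have gen: "finite I" "gen \<in> I \<rightarrow> carrier M" using span unfolding spanned_by_def by auto
  have R: "ring R" and phi: "phi \<in> ring_hom R L"
    using aa cring.axioms(1) unfolding artin_algebra_def artinian_cring_def by auto
  have "submod R (power_module (restrict_scalars phi M) I) (N n)" for n
    unfolding N_def using gen(2) lhom_closed[OF lhom_funpow[OF \<psi>]]
    by (intro submod_commuting_endos_values[OF aa M \<psi>]) auto
  moreover have "N (Suc n) \<subseteq> N n" for n
  proof
    fix x assume "x \<in> N (Suc n)"
    then obtain e where e: "e \<in> ?E" and x: "x = (\<lambda>i\<in>I. e ((\<psi> ^^ Suc n) (gen i)))"
      unfolding N_def by blast
    have e\<psi>: "(\<lambda>y. e (\<psi> y)) \<in> ?E" using e lhom_comp[OF \<psi>] lhom_closed[OF \<psi>]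
      unfolding commuting_endos_def by auto
    have "x = (\<lambda>i\<in>I. e (\<psi> ((\<psi> ^^ n) (gen i))))"
      unfolding x by simp
    then show "x \<in> N n"
      unfolding N_def using e\<psi> by (intro image_eqI[where x = "\<lambda>y. e (\<psi> y)"]) simp_all
  qed
  moreover have "artinian_module R (power_module (restrict_scalars phi M) I)"
    using artinian_power_module[OF lmodule_restrict_scalars[OF M R phi] artinian_fg_module[OF aa M span]
        gen(1)] .
  ultimately obtain m where "N (Suc m) = N m" using artinian_moduleD by (metis le_add2 plus_1_eq_Suc)
  moreover have "(\<lambda>i\<in>I. (\<psi> ^^ m) (gen i)) \<in> N m"
    unfolding N_def commuting_endos_def using lhom_id by force
  ultimately obtain e where e: "e \<in> ?E" and
    eq: "(\<lambda>i\<in>I. (\<psi> ^^ m) (gen i)) = (\<lambda>i\<in>I. e ((\<psi> ^^ Suc m) (gen i)))"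
    unfolding N_def by (metis (no_types, lifting) imageE)
  have e_lhom: "lhom L M M e" using e unfolding commuting_endos_def by blast
  have left_inv: "(\<psi> ^^ m) x = e ((\<psi> ^^ Suc m) x)" if "x \<in> carrier M" for x
  proof (rule lhom_eq_on_generators[OF M M span lhom_funpow[OF \<psi>]
        lhom_comp[OF lhom_funpow[OF \<psi>] e_lhom] _ that])
    fix i assume "i \<in> I"
    then show "(\<psi> ^^ m) (gen i) = e ((\<psi> ^^ Suc m) (gen i))" using fun_cong[OF eq, of i] by simp
  qed
  have "(\<psi> ^^ m) ` carrier M = carrier M"
  proof (induct m)
    case (Suc m) then show ?case using surj image_image[of \<psi> "\<psi> ^^ m" "carrier M"] by simp
  qed simp
  then show ?thesis
  proof (intro lhom_inj_onI[OF M M \<psi>])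
    fix z assume z: "z \<in> carrier M" "\<psi> z = \<zero>\<^bsub>M\<^esub>" and "(\<psi> ^^ m) ` carrier M = carrier M"
    then obtain w where w: "w \<in> carrier M" "z = (\<psi> ^^ m) w" by blast
    have "z = e (\<psi> ((\<psi> ^^ m) w))" using left_inv[OF w(1)] w(2) by simp
    also have "\<dots> = \<zero>\<^bsub>M\<^esub>" using w z(2) lhom_zero[OF M M e_lhom] by simp
    finally show "z = \<zero>\<^bsub>M\<^esub>" .
  qed
qed

lemma submod_image:
  assumes "lmodule L M" "lmodule L N" "lhom L M N h" shows "submod L N (h ` carrier M)"
proof -
  interpret M: lmod L M by unfold_locales fact
  show ?thesis
    unfolding submod_def using lhom_zero[OF assms] lhom_closed[OF assms(3)]
    by (auto simp: lhom_add[OF assms(3), symmetric] lhom_smult[OF assms(3), symmetric]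
        intro!: image_eqI[OF _ M.zero_closed])
qed

lemma submod_kernel:
  assumes "lmodule L M" "lmodule L N" "lhom L M N h" shows "submod L M {x \<in> carrier M. h x = \<zero>\<^bsub>N\<^esub>}"
proof -
  interpret M: lmod L M by unfold_locales fact
  interpret N: lmod L N by unfold_locales fact
  show ?thesis
    unfolding submod_def using lhom_zero[OF assms] lhom_add[OF assms(3)] lhom_smult[OF assms(3)] by auto
qed

lemma lhom_restrict_domain: "lhom L M N h \<Longrightarrow> U \<subseteq> carrier M \<Longrightarrow> lhom L (M\<lparr>carrier := U\<rparr>) N h"
  unfolding lhom_def by (auto simp: subset_iff)

lemma lhom_restrict_codomain: "lhom L M N h \<Longrightarrow> h ` carrier M \<subseteq> U \<Longrightarrow> lhom L M (N\<lparr>carrier := U\<rparr>) h"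
  unfolding lhom_def by (auto simp: image_subset_iff)

lemma funpow_image_subset: "f ` A \<subseteq> A \<Longrightarrow> (f ^^ n) ` A \<subseteq> A"
  by (induct n) auto

lemma inj_on_funpow: assumes "inj_on f A" "f ` A \<subseteq> A" shows "inj_on (f ^^ n) A"
proof (induct n)
  case (Suc n)
  then show ?case
    using comp_inj_on[OF Suc inj_on_subset[OF assms(1) funpow_image_subset[OF assms(2)]]]
    by (simp add: comp_def)
qed simp

lemma funpow_image_chain:
  assumes "artin_algebra R phi L" "lmodule L M" "spanned_by L M I gen" "lhom L M M \<phi>"
  obtains n where "\<And>k. k \<ge> n \<Longrightarrow> (\<phi> ^^ k) ` carrier M = (\<phi> ^^ n) ` carrier M"
proof -
  have phi: "phi \<in> ring_hom R L" using assms(1) unfolding artin_algebra_def by blast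
  have "submod R (restrict_scalars phi M) ((\<phi> ^^ k) ` carrier M)" for k
    using submod_restrict_scalars[OF phi submod_image[OF assms(2,2) lhom_funpow[OF assms(4)]]] .
  moreover have "(\<phi> ^^ Suc k) ` carrier M \<subseteq> (\<phi> ^^ k) ` carrier M" for k
    using lhom_closed[OF assms(4)] by (auto simp: funpow_Suc_right simp del: funpow.simps)
  ultimately obtain n where "\<forall>k\<ge>n. (\<phi> ^^ k) ` carrier M = (\<phi> ^^ n) ` carrier M"
    using artinian_moduleD[OF artinian_fg_module[OF assms(1-3)], of "\<lambda>k. (\<phi> ^^ k) ` carrier M"]
    by blast
  then show thesis using that by blast
qed

lemma stable_image_plus_kernel:
  assumes M: "lmodule L M" and \<phi>: "lhom L M M \<phi>"
    and stable: "(\<phi> ^^ (n + n)) ` carrier M = (\<phi> ^^ n) ` carrier M"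
  shows "{x \<oplus>\<^bsub>M\<^esub> y | x y. x \<in> (\<phi> ^^ n) ` carrier M \<and> y \<in> {x \<in> carrier M. (\<phi> ^^ n) x = \<zero>\<^bsub>M\<^esub>}}
    = carrier M"
    (is "{x \<oplus>\<^bsub>M\<^esub> y | x y. x \<in> ?U \<and> y \<in> ?K} = _")
proof
  interpret M: lmod L M by unfold_locales fact
  note \<phi>n = lhom_funpow[OF \<phi>, of n]
  show "{x \<oplus>\<^bsub>M\<^esub> y | x y. x \<in> ?U \<and> y \<in> ?K} \<subseteq> carrier M" using lhom_closed[OF \<phi>n] by auto
  show "carrier M \<subseteq> {x \<oplus>\<^bsub>M\<^esub> y | x y. x \<in> ?U \<and> y \<in> ?K}"
  proof
    fix x assume x: "x \<in> carrier M"
    have "(\<phi> ^^ n) x \<in> (\<phi> ^^ (n + n)) ` carrier M" using stable x by simp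
    then obtain y where y: "y \<in> carrier M" "(\<phi> ^^ n) x = (\<phi> ^^ n) ((\<phi> ^^ n) y)"
      by (auto simp: funpow_add)
    define u where "u = (\<phi> ^^ n) y"
    have u: "u \<in> ?U" "u \<in> carrier M" unfolding u_def using y lhom_closed[OF \<phi>n] by auto
    have "x \<ominus>\<^bsub>M\<^esub> u \<in> ?K"
      using x u y lhom_minus[OF M M \<phi>n x u(2)] lhom_closed[OF \<phi>n]
      unfolding u_def by (simp add: M.minus_eq_zero_iff)
    then show "x \<in> {x \<oplus>\<^bsub>M\<^esub> y | x y. x \<in> ?U \<and> y \<in> ?K}"
      using M.add_minus_cancel[OF x u(2)] u(1) by (metis (mono_tags, lifting) mem_Collect_eq)
  qed
qed

lemma fitting_decomposition:
  assumes aa: "artin_algebra R phi L" and M: "lmodule L M" and span: "spanned_by L M I gen"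
    and \<phi>: "lhom L M M \<phi>"
    and stable: "\<And>k. k \<ge> n \<Longrightarrow> (\<phi> ^^ k) ` carrier M = (\<phi> ^^ n) ` carrier M"
  defines "U \<equiv> (\<phi> ^^ n) ` carrier M" and "K \<equiv> {x \<in> carrier M. (\<phi> ^^ n) x = \<zero>\<^bsub>M\<^esub>}"
  shows "submod L M U" "submod L M K" "\<phi> ` U = U" "inj_on \<phi> U" "U \<inter> K = {\<zero>\<^bsub>M\<^esub>}"
    "{x \<oplus>\<^bsub>M\<^esub> y | x y. x \<in> U \<and> y \<in> K} = carrier M"
proof -
  interpret M: lmod L M by unfold_locales fact
  note \<phi>n = lhom_funpow[OF \<phi>, of n]
  show U: "submod L M U" unfolding U_def by (rule submod_image[OF M M \<phi>n])
  show "submod L M K" unfolding K_def by (rule submod_kernel[OF M M \<phi>n])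
  have UM: "U \<subseteq> carrier M" using M.submod_closed[OF U] by blast
  show \<phi>U: "\<phi> ` U = U"
    using stable[of "Suc n"] unfolding U_def by (simp add: image_comp)
  have "lhom L (M\<lparr>carrier := U\<rparr>) (M\<lparr>carrier := U\<rparr>) \<phi>"
    using lhom_restrict_codomain[OF lhom_restrict_domain[OF \<phi> UM]] \<phi>U by simp
  moreover have "spanned_by L (M\<lparr>carrier := U\<rparr>) I (\<lambda>i. (\<phi> ^^ n) (gen i))"
    using spanned_by_image[OF M M.lmodule_submod[OF U] span lhom_restrict_codomain[OF \<phi>n]]
    unfolding U_def by simp
  ultimately show inj: "inj_on \<phi> U"
    using surj_endo_inj[OF aa M.lmodule_submod[OF U]] \<phi>U by simp
  show "U \<inter> K = {\<zero>\<^bsub>M\<^esub>}"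
  proof
    show "U \<inter> K \<subseteq> {\<zero>\<^bsub>M\<^esub>}"
    proof
      fix x assume x: "x \<in> U \<inter> K"
      have "(\<phi> ^^ n) x = (\<phi> ^^ n) \<zero>\<^bsub>M\<^esub>" using x lhom_zero[OF M M \<phi>n] unfolding K_def by simp
      then show "x \<in> {\<zero>\<^bsub>M\<^esub>}"
        using inj_on_funpow[OF inj] \<phi>U x M.submod_closed[OF U] U unfolding submod_def inj_on_def
        by blast
    qed
    show "{\<zero>\<^bsub>M\<^esub>} \<subseteq> U \<inter> K" using U lhom_zero[OF M M \<phi>n] unfolding submod_def K_def by simp
  qed
  show "{x \<oplus>\<^bsub>M\<^esub> y | x y. x \<in> U \<and> y \<in> K} = carrier M"
    unfolding U_def K_def using stable[of "n + n"] by (intro stable_image_plus_kernel[OF M \<phi>]) simp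
qed

lemma fitting:
  assumes aa: "artin_algebra R phi L" and M: "lmodule L M" and span: "spanned_by L M I gen"
    and ind: "indecomposable L M" and \<phi>: "lhom L M M \<phi>"
  shows "bij_betw \<phi> (carrier M) (carrier M) \<or> (\<exists>n. \<forall>x\<in>carrier M. (\<phi> ^^ n) x = \<zero>\<^bsub>M\<^esub>)"
proof -
  interpret M: lmod L M by unfold_locales fact
  obtain n where stable: "\<And>k. k \<ge> n \<Longrightarrow> (\<phi> ^^ k) ` carrier M = (\<phi> ^^ n) ` carrier M"
    using funpow_image_chain[OF aa M span \<phi>] by blast
  let ?U = "(\<phi> ^^ n) ` carrier M" and ?K = "{x \<in> carrier M. (\<phi> ^^ n) x = \<zero>\<^bsub>M\<^esub>}"
  note decomp = fitting_decomposition[OF aa M span \<phi> stable]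
  have "?U = {\<zero>\<^bsub>M\<^esub>} \<or> ?K = {\<zero>\<^bsub>M\<^esub>}"
    using ind decomp(1,2,5,6) unfolding indecomposable_def by blast
  moreover have "?U = carrier M" if K0: "?K = {\<zero>\<^bsub>M\<^esub>}"
  proof
    show "?U \<subseteq> carrier M" using M.submod_closed[OF decomp(1)] by blast
    show "carrier M \<subseteq> ?U"
    proof
      fix x assume "x \<in> carrier M"
      then obtain u k where "u \<in> ?U" "k \<in> ?K" "x = u \<oplus>\<^bsub>M\<^esub> k" using decomp(6) by blast
      then show "x \<in> ?U" using K0 M.submod_closed[OF decomp(1)] by auto
    qed
  qed
  ultimately consider "?U = {\<zero>\<^bsub>M\<^esub>}" | "?U = carrier M" by blast
  then show ?thesis
  proof cases
    case 1
    then have "\<forall>x\<in>carrier M. (\<phi> ^^ n) x = \<zero>\<^bsub>M\<^esub>" by blast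
    then show ?thesis by blast
  next
    case 2
    then show ?thesis using decomp(3,4) unfolding bij_betw_def by simp
  qed
qed

lemma fitting_inj_imp_bij:
  assumes "artin_algebra R phi L" "lmodule L M" "spanned_by L M I gen" "indecomposable L M"
    "lhom L M M \<phi>" "inj_on \<phi> (carrier M)"
  shows "bij_betw \<phi> (carrier M) (carrier M)"
proof -
  interpret M: lmod L M by unfold_locales fact
  have "carrier M \<noteq> {\<zero>\<^bsub>M\<^esub>}" using assms(4) unfolding indecomposable_def by blast
  moreover have "carrier M = {\<zero>\<^bsub>M\<^esub>}" if "\<forall>x\<in>carrier M. (\<phi> ^^ n) x = \<zero>\<^bsub>M\<^esub>" for n
  proof -
    have "inj_on (\<phi> ^^ n) (carrier M)" using inj_on_funpow[OF assms(6)] lhom_closed[OF assms(5)] by blast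
    then have "x = \<zero>\<^bsub>M\<^esub>" if "x \<in> carrier M" for x
      using inj_onD[of "\<phi> ^^ n" "carrier M" x "\<zero>\<^bsub>M\<^esub>"] that
        \<open>\<forall>x\<in>carrier M. (\<phi> ^^ n) x = \<zero>\<^bsub>M\<^esub>\<close> by simp
    then show ?thesis using M.zero_closed by blast
  qed
  ultimately show ?thesis using fitting[OF assms(1-5)] by blast
qed

text \<open>The endomorphism ring of an indecomposable module is local.\<close>

lemma indecomposable_endo_sum_bij:
  assumes aa: "artin_algebra R phi L" and M: "lmodule L M" and span: "spanned_by L M I gen"
    and ind: "indecomposable L M" and \<phi>1: "lhom L M M \<phi>1" and \<phi>2: "lhom L M M \<phi>2"
    and bij: "bij_betw (\<lambda>x. \<phi>1 x \<oplus>\<^bsub>M\<^esub> \<phi>2 x) (carrier M) (carrier M)"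
  shows "bij_betw \<phi>1 (carrier M) (carrier M) \<or> bij_betw \<phi>2 (carrier M) (carrier M)"
proof -
  interpret M: lmod L M by unfold_locales fact
  let ?\<theta> = "\<lambda>x. \<phi>1 x \<oplus>\<^bsub>M\<^esub> \<phi>2 x"
  define \<sigma> where "\<sigma> = the_inv_into (carrier M) ?\<theta>"
  have \<theta>: "lhom L M M ?\<theta>" by (rule lhom_add_fun[OF M \<phi>1 \<phi>2])
  have \<sigma>: "lhom L M M \<sigma>" unfolding \<sigma>_def by (rule lhom_inverse[OF M M \<theta> bij])
  have \<theta>\<sigma>: "?\<theta> (\<sigma> z) = z" if "z \<in> carrier M" for z
    using that bij f_the_inv_into_f_bij_betw unfolding \<sigma>_def by fastforce
  have \<sigma>\<theta>: "\<sigma> (?\<theta> a) = a" if "a \<in> carrier M" for a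
    using that bij the_inv_into_f_f unfolding \<sigma>_def bij_betw_def by fastforce
  define x where "x a = \<sigma> (\<phi>1 a)" for a
  define y where "y a = \<sigma> (\<phi>2 a)" for a
  have x: "lhom L M M x" unfolding x_def by (rule lhom_comp[OF \<phi>1 \<sigma>])
  have y: "lhom L M M y" unfolding y_def by (rule lhom_comp[OF \<phi>2 \<sigma>])
  have xy: "x a \<oplus>\<^bsub>M\<^esub> y a = a" if "a \<in> carrier M" for a
    unfolding x_def y_def using that lhom_add[OF \<sigma>] lhom_closed[OF \<phi>1] lhom_closed[OF \<phi>2] \<sigma>\<theta> by metis
  have bij_factor: "bij_betw \<phi> (carrier M) (carrier M)"
    if "bij_betw e (carrier M) (carrier M)" "\<And>a. a \<in> carrier M \<Longrightarrow> e a = \<sigma> (\<phi> a)"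
      "lhom L M M \<phi>" for e \<phi>
  proof -
    have "bij_betw (\<lambda>a. ?\<theta> (e a)) (carrier M) (carrier M)"
      using bij_betw_trans[OF that(1) bij] by (simp add: comp_def)
    moreover have "?\<theta> (e a) = \<phi> a" if "a \<in> carrier M" for a
      using that \<open>\<And>a. a \<in> carrier M \<Longrightarrow> e a = \<sigma> (\<phi> a)\<close> \<theta>\<sigma> lhom_closed[OF \<open>lhom L M M \<phi>\<close>] by simp
    ultimately show ?thesis using bij_betw_cong by (metis (no_types, lifting))
  qed
  consider "bij_betw x (carrier M) (carrier M)" | n where "\<forall>a\<in>carrier M. (x ^^ n) a = \<zero>\<^bsub>M\<^esub>"
    using fitting[OF aa M span ind x] by blast
  then show ?thesis
  proof cases
    case 1
    then show ?thesis by (intro disjI1 bij_factor[OF 1 _ \<phi>1]) (simp add: x_def)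
  next
    case (2 n)
    have "inj_on y (carrier M)"
    proof (rule lhom_inj_onI[OF M M y])
      fix a assume a: "a \<in> carrier M" "y a = \<zero>\<^bsub>M\<^esub>"
      then have "x a = a" using xy[OF a(1)] lhom_closed[OF x a(1)] by simp
      then have "(x ^^ n) a = a" by (induct n) simp_all
      then show "a = \<zero>\<^bsub>M\<^esub>" using 2 a(1) by simp
    qed
    then have "bij_betw y (carrier M) (carrier M)" by (rule fitting_inj_imp_bij[OF aa M span ind y])
    then show ?thesis by (intro disjI2 bij_factor[OF _ _ \<phi>2]) (simp_all add: y_def[symmetric])
  qed
qed

section \<open>Lifting properties against arbitrary finitely generated modules\<close>

text \<open>The definitions of projective and injective modules only test against modules whose
  elements are sets of sequences; every finitely generated module is transported to such a carrier
  along an injection.\<close>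

definition transport_module :: "('r, 'x) module \<Rightarrow> ('x \<Rightarrow> 'y) \<Rightarrow> ('r, 'y) module" where
  "transport_module Q \<iota> = \<lparr>carrier = \<iota> ` carrier Q, monoid.mult = (\<lambda>a b. a), one = \<iota> \<zero>\<^bsub>Q\<^esub>,
     ring.zero = \<iota> \<zero>\<^bsub>Q\<^esub>,
     ring.add = (\<lambda>a b. \<iota> (the_inv_into (carrier Q) \<iota> a \<oplus>\<^bsub>Q\<^esub> the_inv_into (carrier Q) \<iota> b)),
     smult = (\<lambda>r a. \<iota> (r \<odot>\<^bsub>Q\<^esub> the_inv_into (carrier Q) \<iota> a))\<rparr>"

lemma transport_module_simps:
  "carrier (transport_module Q \<iota>) = \<iota> ` carrier Q"
  "a \<oplus>\<^bsub>transport_module Q \<iota>\<^esub> b = \<iota> (the_inv_into (carrier Q) \<iota> a \<oplus>\<^bsub>Q\<^esub> the_inv_into (carrier Q) \<iota> b)"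
  "\<zero>\<^bsub>transport_module Q \<iota>\<^esub> = \<iota> \<zero>\<^bsub>Q\<^esub>"
  "r \<odot>\<^bsub>transport_module Q \<iota>\<^esub> a = \<iota> (r \<odot>\<^bsub>Q\<^esub> the_inv_into (carrier Q) \<iota> a)"
  by (simp_all add: transport_module_def)

lemma lmodule_transport_module:
  assumes Q: "lmodule L Q" and inj: "inj_on \<iota> (carrier Q)"
  shows "lmodule L (transport_module Q \<iota>)"
proof -
  interpret Q: lmod L Q by unfold_locales fact
  let ?T = "transport_module Q \<iota>"
  have inv: "x \<in> carrier Q \<Longrightarrow> the_inv_into (carrier Q) \<iota> (\<iota> x) = x" for x
    using the_inv_into_f_f[OF inj] by blast
  note simps = transport_module_simps inv
  have elem: "\<exists>a\<in>carrier Q. x = \<iota> a" if "x \<in> carrier ?T" for x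
    using that by (auto simp: transport_module_simps)
  have ag: "abelian_group ?T"
  proof (rule abelian_groupI)
    fix x y assume "x \<in> carrier ?T" "y \<in> carrier ?T"
    then show "x \<oplus>\<^bsub>?T\<^esub> y \<in> carrier ?T" and "x \<oplus>\<^bsub>?T\<^esub> y = y \<oplus>\<^bsub>?T\<^esub> x"
      by (auto dest!: elem simp: simps Q.a_comm)
  next
    fix x y z assume "x \<in> carrier ?T" "y \<in> carrier ?T" "z \<in> carrier ?T"
    then show "x \<oplus>\<^bsub>?T\<^esub> y \<oplus>\<^bsub>?T\<^esub> z = x \<oplus>\<^bsub>?T\<^esub> (y \<oplus>\<^bsub>?T\<^esub> z)"
      by (auto dest!: elem simp: simps Q.a_assoc)
  next
    fix x assume "x \<in> carrier ?T"
    then obtain a where a: "a \<in> carrier Q" "x = \<iota> a" by (blast dest: elem)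
    then show "\<zero>\<^bsub>?T\<^esub> \<oplus>\<^bsub>?T\<^esub> x = x" by (simp add: simps)
    show "\<exists>y\<in>carrier ?T. y \<oplus>\<^bsub>?T\<^esub> x = \<zero>\<^bsub>?T\<^esub>"
      using a by (intro bexI[of _ "\<iota> (\<ominus>\<^bsub>Q\<^esub> a)"]) (simp_all add: simps Q.l_neg)
  qed (simp add: transport_module_simps)
  have one: "\<one>\<^bsub>L\<^esub> \<odot>\<^bsub>?T\<^esub> x = x" if "x \<in> carrier ?T" for x
    using elem[OF that] by (auto simp: simps)
  have smult: "a \<odot>\<^bsub>?T\<^esub> x \<in> carrier ?T" "(a \<oplus>\<^bsub>L\<^esub> b) \<odot>\<^bsub>?T\<^esub> x = a \<odot>\<^bsub>?T\<^esub> x \<oplus>\<^bsub>?T\<^esub> b \<odot>\<^bsub>?T\<^esub> x"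
    "(a \<otimes>\<^bsub>L\<^esub> b) \<odot>\<^bsub>?T\<^esub> x = a \<odot>\<^bsub>?T\<^esub> (b \<odot>\<^bsub>?T\<^esub> x)"
    if "a \<in> carrier L" "b \<in> carrier L" "x \<in> carrier ?T" for a b x
    using that elem[OF that(3)] by (auto simp: simps Q.smult_l_distr Q.smult_assoc)
  have distr: "a \<odot>\<^bsub>?T\<^esub> (x \<oplus>\<^bsub>?T\<^esub> y) = a \<odot>\<^bsub>?T\<^esub> x \<oplus>\<^bsub>?T\<^esub> a \<odot>\<^bsub>?T\<^esub> y"
    if "a \<in> carrier L" "x \<in> carrier ?T" "y \<in> carrier ?T" for a x y
    using that elem[OF that(2)] elem[OF that(3)] by (auto simp: simps Q.smult_r_distr)
  show ?thesis unfolding lmodule_def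
    by (intro conjI ballI ag Q.L.ring_axioms) (simp_all add: one smult distr)
qed

lemma lhom_transport_module: "inj_on \<iota> (carrier Q) \<Longrightarrow> lhom L Q (transport_module Q \<iota>) \<iota>"
  unfolding lhom_def by (auto simp: transport_module_simps the_inv_into_f_f)

lemma fg_lmodule_transport_module:
  assumes fg: "fg_lmodule L Q" and inj: "inj_on \<iota> (carrier Q)"
  shows "fg_lmodule L (transport_module Q \<iota>)"
proof -
  have Q: "lmodule L Q" using fg unfolding fg_lmodule_def by blast
  interpret Q: lmod L Q by unfold_locales fact
  let ?T = "transport_module Q \<iota>"
  have T: "lmodule L ?T" by (rule lmodule_transport_module[OF Q inj])
  interpret T: lmod L ?T by unfold_locales fact
  obtain S where S: "finite S" "S \<subseteq> carrier Q"
    "\<forall>x\<in>carrier Q. \<exists>c. c \<in> S \<rightarrow> carrier L \<and> x = finsum Q (\<lambda>s. c s \<odot>\<^bsub>Q\<^esub> s) S"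
    using fg unfolding fg_lmodule_def by blast
  have inv: "x \<in> carrier Q \<Longrightarrow> the_inv_into (carrier Q) \<iota> (\<iota> x) = x" for x
    using the_inv_into_f_f[OF inj] by blast
  show ?thesis unfolding fg_lmodule_def
  proof (intro conjI exI[of _ "\<iota> ` S"] T ballI)
    show "finite (\<iota> ` S)" "\<iota> ` S \<subseteq> carrier ?T" using S by (auto simp: transport_module_simps)
    fix y assume "y \<in> carrier ?T"
    then obtain x where x: "x \<in> carrier Q" "y = \<iota> x" by (auto simp: transport_module_simps)
    then obtain c where c: "c \<in> S \<rightarrow> carrier L" "x = finsum Q (\<lambda>s. c s \<odot>\<^bsub>Q\<^esub> s) S"
      using S(3) by blast
    let ?c = "\<lambda>t. c (the_inv_into (carrier Q) \<iota> t)"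
    have "finsum ?T (\<lambda>t. ?c t \<odot>\<^bsub>?T\<^esub> t) (\<iota> ` S) = finsum ?T (\<lambda>s. ?c (\<iota> s) \<odot>\<^bsub>?T\<^esub> \<iota> s) S"
      using c S inj_on_subset[OF inj S(2)]
      by (intro T.finsum_reindex) (auto simp: transport_module_simps inv subset_iff Pi_iff)
    also have "\<dots> = finsum ?T (\<lambda>s. \<iota> (c s \<odot>\<^bsub>Q\<^esub> s)) S"
      using c S by (intro T.finsum_cong') (auto simp: transport_module_simps inv subset_iff Pi_iff)
    also have "\<dots> = y"
      unfolding x(2) c(2) using c S
      by (intro lhom_finsum[OF Q T lhom_transport_module[OF inj] S(1), symmetric]) auto
    finally show "\<exists>c. c \<in> \<iota> ` S \<rightarrow> carrier L \<and> y = finsum ?T (\<lambda>s. c s \<odot>\<^bsub>?T\<^esub> s) (\<iota> ` S)"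
      using c S by (intro exI[of _ ?c]) (auto simp: inv subset_iff Pi_iff)
  qed
qed

text \<open>Every element of a finitely generated module is encoded by the set of its coefficient
  sequences with respect to a fixed enumeration of a generating set.\<close>

lemma fg_lmodule_encoding:
  fixes Q :: "('r, 'q) module"
  assumes fg: "fg_lmodule L Q"
  obtains \<iota> :: "'q \<Rightarrow> (nat \<Rightarrow> 'r) set" where "inj_on \<iota> (carrier Q)"
proof -
  obtain S where S: "finite S" "S \<subseteq> carrier Q"
    "\<forall>x\<in>carrier Q. \<exists>c. c \<in> S \<rightarrow> carrier L \<and> x = finsum Q (\<lambda>s. c s \<odot>\<^bsub>Q\<^esub> s) S"
    using fg unfolding fg_lmodule_def by blast
  obtain f :: "'q \<Rightarrow> nat" and n where f: "f ` S = {i. i < n}" "inj_on f S"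
    using finite_imp_inj_to_nat_seg[OF S(1)] by blast
  have Q: "lmodule L Q" using fg unfolding fg_lmodule_def by auto
  interpret Q: lmod L Q by unfold_locales fact
  define \<iota> :: "'q \<Rightarrow> (nat \<Rightarrow> 'r) set" where
    "\<iota> x = {v. x = finsum Q (\<lambda>s. v (f s) \<odot>\<^bsub>Q\<^esub> s) S}" for x
  have nonempty: "\<exists>v. v \<in> \<iota> x" if x: "x \<in> carrier Q" for x
  proof -
    obtain c where c: "c \<in> S \<rightarrow> carrier L" "x = finsum Q (\<lambda>s. c s \<odot>\<^bsub>Q\<^esub> s) S"
      using S(3) x by blast
    have "x = finsum Q (\<lambda>s. (\<lambda>k. c (inv_into S f k)) (f s) \<odot>\<^bsub>Q\<^esub> s) S"
      unfolding c(2) using c(1) S(2) inv_into_f_f[OF f(2)]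
      by (intro Q.finsum_cong') (auto simp: Pi_iff subset_iff)
    then have "(\<lambda>k. c (inv_into S f k)) \<in> \<iota> x" unfolding \<iota>_def by simp
    then show ?thesis by auto
  qed
  have "inj_on \<iota> (carrier Q)"
  proof (rule inj_onI)
    fix x y assume "x \<in> carrier Q" "\<iota> x = \<iota> y"
    then obtain v where "v \<in> \<iota> x" "v \<in> \<iota> y" using nonempty by metis
    then show "x = y" unfolding \<iota>_def by simp
  qed
  then show thesis by (rule that)
qed

lemma fg_lmodule_test_copy:
  fixes Q :: "('r, 'q) module"
  assumes "fg_lmodule L Q"
  obtains Q' :: "('r, (nat \<Rightarrow> 'r) set) module" and \<iota> j
  where "fg_lmodule L Q'" "lhom L Q Q' \<iota>" "lhom L Q' Q j"
    "\<And>x. x \<in> carrier Q \<Longrightarrow> j (\<iota> x) = x" "\<And>y. y \<in> carrier Q' \<Longrightarrow> \<iota> (j y) = y"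
proof -
  have Q: "lmodule L Q" using assms unfolding fg_lmodule_def by blast
  obtain \<iota> :: "'q \<Rightarrow> (nat \<Rightarrow> 'r) set" where inj: "inj_on \<iota> (carrier Q)"
    using fg_lmodule_encoding[OF assms] by blast
  let ?Q' = "transport_module Q \<iota>"
  have bij: "bij_betw \<iota> (carrier Q) (carrier ?Q')"
    using inj by (simp add: bij_betw_def transport_module_simps)
  show thesis
  proof (rule that[of ?Q' \<iota> "the_inv_into (carrier Q) \<iota>"])
    show "fg_lmodule L ?Q'" by (rule fg_lmodule_transport_module[OF assms inj])
    show "lhom L Q ?Q' \<iota>" by (rule lhom_transport_module[OF inj])
    show "lhom L ?Q' Q (the_inv_into (carrier Q) \<iota>)"
      by (rule lhom_inverse[OF Q lmodule_transport_module[OF Q inj] lhom_transport_module[OF inj] bij])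
  next
    show "the_inv_into (carrier Q) \<iota> (\<iota> x) = x" if "x \<in> carrier Q" for x
      using the_inv_into_f_f[OF inj that] .
  next
    show "\<iota> (the_inv_into (carrier Q) \<iota> y) = y" if "y \<in> carrier ?Q'" for y
      using f_the_inv_into_f[OF inj] that by (simp add: transport_module_simps)
  qed
qed

lemma inj_mod_extend:
  fixes B :: "('r, 'b) module" and M :: "('r, 'm) module" and N :: "('r, 'n) module"
  assumes inj: "inj_mod L B" and M: "fg_lmodule L M" and N: "fg_lmodule L N"
    and h: "lhom L M N h" and h_inj: "inj_on h (carrier M)" and p: "lhom L M B p"
  obtains q where "lhom L N B q" "\<And>x. x \<in> carrier M \<Longrightarrow> q (h x) = p x"
proof -
  obtain M' :: "('r, (nat \<Rightarrow> 'r) set) module" and \<iota>M jM where M': "fg_lmodule L M'"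
    and \<iota>M: "lhom L M M' \<iota>M" and jM: "lhom L M' M jM" and jM_\<iota>M: "\<And>x. x \<in> carrier M \<Longrightarrow> jM (\<iota>M x) = x"
    and \<iota>M_jM: "\<And>y. y \<in> carrier M' \<Longrightarrow> \<iota>M (jM y) = y"
    using fg_lmodule_test_copy[OF M] by metis
  obtain N' :: "('r, (nat \<Rightarrow> 'r) set) module" and \<iota>N jN where N': "fg_lmodule L N'"
    and \<iota>N: "lhom L N N' \<iota>N" and jN_\<iota>N: "\<And>x. x \<in> carrier N \<Longrightarrow> jN (\<iota>N x) = x"
    using fg_lmodule_test_copy[OF N] by metis
  let ?h = "\<lambda>y. \<iota>N (h (jM y))"
  have "inj_on ?h (carrier M')"
  proof (rule inj_onI)
    fix y1 y2 assume y: "y1 \<in> carrier M'" "y2 \<in> carrier M'" "?h y1 = ?h y2"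
    then have "h (jM y1) = h (jM y2)"
      using jN_\<iota>N lhom_closed[OF h] lhom_closed[OF jM] by metis
    then have "jM y1 = jM y2" using h_inj y(1,2) lhom_closed[OF jM] by (meson inj_onD)
    then show "y1 = y2" using \<iota>M_jM y(1,2) by metis
  qed
  then obtain q' where q': "lhom L N' B q'" and q'_h: "\<forall>y\<in>carrier M'. q' (?h y) = p (jM y)"
    using inj M' N' lhom_comp[OF lhom_comp[OF jM h] \<iota>N] lhom_comp[OF jM p]
    unfolding inj_mod_def by blast
  show thesis
  proof (rule that[of "\<lambda>x. q' (\<iota>N x)"])
    show "lhom L N B (\<lambda>x. q' (\<iota>N x))" by (rule lhom_comp[OF \<iota>N q'])
    show "q' (\<iota>N (h x)) = p x" if "x \<in> carrier M" for x
      using q'_h lhom_closed[OF \<iota>M that] jM_\<iota>M[OF that] by metis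
  qed
qed

lemma proj_mod_lift:
  fixes P :: "('r, 'p) module" and M :: "('r, 'm) module" and N :: "('r, 'n) module"
  assumes proj: "proj_mod L P" and M: "fg_lmodule L M" and N: "fg_lmodule L N"
    and h: "lhom L M N h" and h_surj: "h ` carrier M = carrier N" and p: "lhom L P N p"
  obtains q where "lhom L P M q" "\<And>x. x \<in> carrier P \<Longrightarrow> h (q x) = p x"
proof -
  obtain M' :: "('r, (nat \<Rightarrow> 'r) set) module" and \<iota>M jM where M': "fg_lmodule L M'"
    and \<iota>M: "lhom L M M' \<iota>M" and jM: "lhom L M' M jM" and jM_\<iota>M: "\<And>x. x \<in> carrier M \<Longrightarrow> jM (\<iota>M x) = x"
    using fg_lmodule_test_copy[OF M] by metis
  obtain N' :: "('r, (nat \<Rightarrow> 'r) set) module" and \<iota>N jN where N': "fg_lmodule L N'"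
    and \<iota>N: "lhom L N N' \<iota>N" and jN: "lhom L N' N jN" and jN_\<iota>N: "\<And>x. x \<in> carrier N \<Longrightarrow> jN (\<iota>N x) = x"
    and \<iota>N_jN: "\<And>y. y \<in> carrier N' \<Longrightarrow> \<iota>N (jN y) = y"
    using fg_lmodule_test_copy[OF N] by metis
  let ?h = "\<lambda>y. \<iota>N (h (jM y))"
  have "?h ` carrier M' = carrier N'"
  proof
    show "?h ` carrier M' \<subseteq> carrier N'" using lhom_closed[OF lhom_comp[OF lhom_comp[OF jM h] \<iota>N]] by blast
    show "carrier N' \<subseteq> ?h ` carrier M'"
    proof
      fix z assume z: "z \<in> carrier N'"
      then obtain a where a: "a \<in> carrier M" "jN z = h a" using h_surj lhom_closed[OF jN] by (metis imageE)
      then have "z = ?h (\<iota>M a)" using \<iota>N_jN[OF z] jM_\<iota>M by metis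
      then show "z \<in> ?h ` carrier M'" using lhom_closed[OF \<iota>M a(1)] by blast
    qed
  qed
  then obtain q' where q': "lhom L P M' q'" and q'_h: "\<forall>x\<in>carrier P. ?h (q' x) = \<iota>N (p x)"
    using proj M' N' lhom_comp[OF lhom_comp[OF jM h] \<iota>N] lhom_comp[OF p \<iota>N]
    unfolding proj_mod_def by blast
  show thesis
  proof (rule that[of "\<lambda>x. jM (q' x)"])
    show "lhom L P M (\<lambda>x. jM (q' x))" by (rule lhom_comp[OF q' jM])
    show "h (jM (q' x)) = p x" if "x \<in> carrier P" for x
      using q'_h that jN_\<iota>N lhom_closed[OF p that] lhom_closed[OF h] lhom_closed[OF jM]
        lhom_closed[OF q' that] by metis
  qed
qed

section \<open>Kernels, cokernels and idempotents\<close>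

lemma lhom_factor_through_surj:
  assumes B: "lmodule L B" and C: "lmodule L C" and Y: "lmodule L Y"
    and f: "lhom L B C f" and f_surj: "f ` carrier B = carrier C" and k: "lhom L B Y k"
    and ker: "\<And>b. b \<in> carrier B \<Longrightarrow> f b = \<zero>\<^bsub>C\<^esub> \<Longrightarrow> k b = \<zero>\<^bsub>Y\<^esub>"
  obtains u where "lhom L C Y u" "\<And>b. b \<in> carrier B \<Longrightarrow> u (f b) = k b"
proof -
  interpret B: lmod L B by unfold_locales fact
  interpret C: lmod L C by unfold_locales fact
  interpret Y: lmod L Y by unfold_locales fact
  have k_eq: "k b1 = k b2" if b: "b1 \<in> carrier B" "b2 \<in> carrier B" "f b1 = f b2" for b1 b2
  proof -
    have "f (b1 \<ominus>\<^bsub>B\<^esub> b2) = \<zero>\<^bsub>C\<^esub>"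
      using lhom_minus[OF B C f b(1,2)] b lhom_closed[OF f] by (simp add: C.minus_eq_zero_iff)
    then have "k b1 \<ominus>\<^bsub>Y\<^esub> k b2 = \<zero>\<^bsub>Y\<^esub>" using ker[OF B.minus_closed[OF b(1,2)]] lhom_minus[OF B Y k b(1,2)] by simp
    then show ?thesis using Y.minus_eq_zero_iff lhom_closed[OF k] b(1,2) by blast
  qed
  define sec where "sec c = (SOME b. b \<in> carrier B \<and> f b = c)" for c
  have sec: "sec c \<in> carrier B \<and> f (sec c) = c" if "c \<in> carrier C" for c
  proof -
    have "c \<in> f ` carrier B" using f_surj that by simp
    then obtain b where "b \<in> carrier B \<and> f b = c" by (auto simp: image_iff)
    then show ?thesis unfolding sec_def by (rule someI)
  qed
  define u where "u c = k (sec c)" for c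
  have u_f: "u (f b) = k b" if "b \<in> carrier B" for b
    unfolding u_def using k_eq[of "sec (f b)" b] sec[OF lhom_closed[OF f that]] that by simp
  have "lhom L C Y u" unfolding lhom_def
  proof (intro conjI ballI)
    show "u \<in> carrier C \<rightarrow> carrier Y" unfolding u_def using sec lhom_closed[OF k] by simp
  next
    fix x y assume "x \<in> carrier C" "y \<in> carrier C"
    then show "u (x \<oplus>\<^bsub>C\<^esub> y) = u x \<oplus>\<^bsub>Y\<^esub> u y"
      using u_f[of "sec x \<oplus>\<^bsub>B\<^esub> sec y"] sec lhom_add[OF f] lhom_add[OF k] unfolding u_def by simp
  next
    fix a x assume "a \<in> carrier L" "x \<in> carrier C"
    then show "u (a \<odot>\<^bsub>C\<^esub> x) = a \<odot>\<^bsub>Y\<^esub> u x"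
      using u_f[of "a \<odot>\<^bsub>B\<^esub> sec x"] sec lhom_smult[OF f] lhom_smult[OF k] unfolding u_def by simp
  qed
  then show thesis using u_f that by blast
qed

lemma short_exact_lift_to_kernel:
  assumes A: "lmodule L A" and B: "lmodule L B" and Y: "lmodule L Y"
    and ses: "short_exact L A B C g f" and k: "lhom L Y B k"
    and fk: "\<And>y. y \<in> carrier Y \<Longrightarrow> f (k y) = \<zero>\<^bsub>C\<^esub>"
  obtains t where "lhom L Y A t" "\<And>y. y \<in> carrier Y \<Longrightarrow> g (t y) = k y"
proof -
  interpret A: lmod L A by unfold_locales fact
  interpret Y: lmod L Y by unfold_locales fact
  have g: "lhom L A B g" and g_inj: "inj_on g (carrier A)"
    and im: "g ` carrier A = {b \<in> carrier B. f b = \<zero>\<^bsub>C\<^esub>}"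
    using ses unfolding short_exact_def by auto
  define t where "t y = the_inv_into (carrier A) g (k y)" for y
  have k_in: "k y \<in> g ` carrier A" if "y \<in> carrier Y" for y using im fk[OF that] lhom_closed[OF k that] by auto
  have t: "t y \<in> carrier A" if "y \<in> carrier Y" for y
    unfolding t_def using the_inv_into_into[OF g_inj k_in[OF that]] by blast
  have g_t: "g (t y) = k y" if "y \<in> carrier Y" for y
    unfolding t_def using f_the_inv_into_f[OF g_inj k_in[OF that]] .
  have "lhom L Y A t" unfolding lhom_def
  proof (intro conjI ballI)
    show "t \<in> carrier Y \<rightarrow> carrier A" using t by auto
  next
    fix x y assume x: "x \<in> carrier Y" and y: "y \<in> carrier Y"
    have "g (t x \<oplus>\<^bsub>A\<^esub> t y) = g (t (x \<oplus>\<^bsub>Y\<^esub> y))" using lhom_add[OF g] lhom_add[OF k] t g_t x y by simp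
    then show "t (x \<oplus>\<^bsub>Y\<^esub> y) = t x \<oplus>\<^bsub>A\<^esub> t y" using g_inj t x y by (simp add: inj_on_eq_iff)
  next
    fix a y assume a: "a \<in> carrier L" and y: "y \<in> carrier Y"
    have "g (a \<odot>\<^bsub>A\<^esub> t y) = g (t (a \<odot>\<^bsub>Y\<^esub> y))" using lhom_smult[OF g a] lhom_smult[OF k a] t g_t y a by simp
    then show "t (a \<odot>\<^bsub>Y\<^esub> y) = a \<odot>\<^bsub>A\<^esub> t y" using g_inj t y a by (simp add: inj_on_eq_iff)
  qed
  then show thesis using that g_t by blast
qed

context lmod
begin

lemma direct_sum_unique:
  assumes U: "submod L M U" and V: "submod L M V" and disj: "U \<inter> V = {\<zero>}"
    and u: "u1 \<in> U" "u2 \<in> U" "v1 \<in> V" "v2 \<in> V" "u1 \<oplus> v1 = u2 \<oplus> v2"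
  shows "u1 = u2"
proof -
  have m: "u1 \<in> carrier M" "u2 \<in> carrier M" "v1 \<in> carrier M" "v2 \<in> carrier M"
    using u submod_closed U V by auto
  have "(u1 \<ominus> u2) \<oplus> (u2 \<oplus> v1) = u1 \<oplus> v1" using m by (simp add: minus_eq a_assoc r_neg1)
  moreover have "(v2 \<ominus> v1) \<oplus> (u2 \<oplus> v1) = v2 \<oplus> u2"
    using m by (simp add: minus_eq a_assoc a_comm[of u2 v1] r_neg1)
  ultimately have "(u1 \<ominus> u2) \<oplus> (u2 \<oplus> v1) = (v2 \<ominus> v1) \<oplus> (u2 \<oplus> v1)" using u(5) m by (simp add: a_comm)
  then have "u1 \<ominus> u2 = v2 \<ominus> v1" using m by (meson add.right_cancel a_closed minus_closed)
  then have "u1 \<ominus> u2 \<in> U \<inter> V" using submod_minus[OF U u(1,2)] submod_minus[OF V u(4,3)] by simp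
  then show ?thesis using disj minus_eq_zero_iff[OF m(1,2)] by simp
qed

lemma direct_sum_projection:
  assumes U: "submod L M U" and V: "submod L M V" and disj: "U \<inter> V = {\<zero>}"
    and sum: "{x \<oplus> y | x y. x \<in> U \<and> y \<in> V} = carrier M"
  obtains e where "lhom L M M e" "\<And>x. x \<in> carrier M \<Longrightarrow> e x \<in> U"
    "\<And>x. x \<in> U \<Longrightarrow> e x = x" "\<And>x. x \<in> V \<Longrightarrow> e x = \<zero>"
proof -
  have UM: "x \<in> U \<Longrightarrow> x \<in> carrier M" and VM: "x \<in> V \<Longrightarrow> x \<in> carrier M" for x
    using submod_closed U V by auto
  have U_sub: "x \<in> U \<Longrightarrow> y \<in> U \<Longrightarrow> x \<oplus> y \<in> U" "a \<in> carrier L \<Longrightarrow> x \<in> U \<Longrightarrow> a \<odot> x \<in> U"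
    "\<zero> \<in> U" for a x y
    using U unfolding submod_def by auto
  have V_sub: "x \<in> V \<Longrightarrow> y \<in> V \<Longrightarrow> x \<oplus> y \<in> V" "a \<in> carrier L \<Longrightarrow> x \<in> V \<Longrightarrow> a \<odot> x \<in> V"
    "\<zero> \<in> V" for a x y
    using V unfolding submod_def by auto
  have ex: "\<exists>u. u \<in> U \<and> x \<ominus> u \<in> V" if "x \<in> carrier M" for x
  proof -
    have "x \<in> {x \<oplus> y | x y. x \<in> U \<and> y \<in> V}" using sum that by simp
    then obtain u v where uv: "u \<in> U" "v \<in> V" "x = u \<oplus> v" by auto
    then have "x \<ominus> u = v" using UM VM by (simp add: minus_eq a_comm[of u v] a_assoc r_neg2 r_neg)
    then show ?thesis using uv by auto
  qed
  define e where "e x = (SOME u. u \<in> U \<and> x \<ominus> u \<in> V)" for x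
  have e: "e x \<in> U \<and> x \<ominus> e x \<in> V" if "x \<in> carrier M" for x
    unfolding e_def using ex[OF that] by (rule someI_ex)
  have e_sum: "e (u \<oplus> v) = u" if u: "u \<in> U" and v: "v \<in> V" for u v
  proof -
    have uv: "u \<oplus> v \<in> carrier M" using u v UM VM by simp
    have "e (u \<oplus> v) \<oplus> ((u \<oplus> v) \<ominus> e (u \<oplus> v)) = u \<oplus> v"
      using add_minus_cancel[OF uv] e[OF uv] UM by simp
    then show ?thesis
      using direct_sum_unique[OF U V disj, of "e (u \<oplus> v)" u "(u \<oplus> v) \<ominus> e (u \<oplus> v)" v] e[OF uv] u v
      by simp
  qed
  have split: "x = e x \<oplus> (x \<ominus> e x)" if "x \<in> carrier M" for x
    using add_minus_cancel[OF that] e[OF that] UM by simp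
  have "lhom L M M e" unfolding lhom_def
  proof (intro conjI ballI)
    show "e \<in> carrier M \<rightarrow> carrier M" using e UM by simp
  next
    fix x y assume x: "x \<in> carrier M" and y: "y \<in> carrier M"
    have m: "e x \<in> carrier M" "x \<ominus> e x \<in> carrier M" "e y \<in> carrier M" "y \<ominus> e y \<in> carrier M"
      using e[OF x] e[OF y] UM VM by auto
    have "x \<oplus> y = (e x \<oplus> e y) \<oplus> ((x \<ominus> e x) \<oplus> (y \<ominus> e y))"
      using split[OF x] split[OF y] m by (metis a_ac(1) a_ac(3) a_closed)
    then show "e (x \<oplus> y) = e x \<oplus> e y"
      using e_sum U_sub(1) V_sub(1) e[OF x] e[OF y] by metis
  next
    fix a x assume a: "a \<in> carrier L" and x: "x \<in> carrier M"
    have m: "e x \<in> carrier M" "x \<ominus> e x \<in> carrier M" using e[OF x] UM VM by auto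
    have "a \<odot> x = a \<odot> e x \<oplus> a \<odot> (x \<ominus> e x)" using split[OF x] m smult_r_distr[OF a] by metis
    then show "e (a \<odot> x) = a \<odot> e x"
      using e_sum U_sub(2)[OF a] V_sub(2)[OF a] e[OF x] by metis
  qed
  moreover have "e x \<in> U" if "x \<in> carrier M" for x using e[OF that] by simp
  moreover have "e x = x" if "x \<in> U" for x using e_sum[OF that V_sub(3)] UM[OF that] by simp
  moreover have "e x = \<zero>" if "x \<in> V" for x using e_sum[OF U_sub(3) that] VM[OF that] by simp
  ultimately show thesis by (rule that)
qed

end

lemma indecomposableI_idempotents:
  assumes M: "lmodule L M" and nonzero: "carrier M \<noteq> {\<zero>\<^bsub>M\<^esub>}"
    and idem: "\<And>e. lhom L M M e \<Longrightarrow> (\<And>x. x \<in> carrier M \<Longrightarrow> e (e x) = e x) \<Longrightarrow>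
      (\<forall>x\<in>carrier M. e x = x) \<or> (\<forall>x\<in>carrier M. e x = \<zero>\<^bsub>M\<^esub>)"
  shows "indecomposable L M"
  unfolding indecomposable_def
proof (intro conjI allI impI nonzero)
  interpret M: lmod L M by unfold_locales fact
  fix U V
  assume "submod L M U \<and> submod L M V \<and> U \<inter> V = {\<zero>\<^bsub>M\<^esub>} \<and>
    {x \<oplus>\<^bsub>M\<^esub> y | x y. x \<in> U \<and> y \<in> V} = carrier M"
  then have U: "submod L M U" and V: "submod L M V" and disj: "U \<inter> V = {\<zero>\<^bsub>M\<^esub>}"
    and sum: "{x \<oplus>\<^bsub>M\<^esub> y | x y. x \<in> U \<and> y \<in> V} = carrier M" by auto
  obtain e where e: "lhom L M M e" "\<And>x. x \<in> carrier M \<Longrightarrow> e x \<in> U"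
    "\<And>x. x \<in> U \<Longrightarrow> e x = x" "\<And>x. x \<in> V \<Longrightarrow> e x = \<zero>\<^bsub>M\<^esub>"
    using M.direct_sum_projection[OF U V disj sum] by metis
  have "e (e x) = e x" if "x \<in> carrier M" for x using e(2,3) that by simp
  then consider "\<forall>x\<in>carrier M. e x = x" | "\<forall>x\<in>carrier M. e x = \<zero>\<^bsub>M\<^esub>"
    using idem[OF e(1)] by blast
  then show "U = {\<zero>\<^bsub>M\<^esub>} \<or> V = {\<zero>\<^bsub>M\<^esub>}"
  proof cases
    case 1
    then have "V \<subseteq> {\<zero>\<^bsub>M\<^esub>}" using e(4) M.submod_closed[OF V] by force
    then show ?thesis using V unfolding submod_def by blast
  next
    case 2
    then have "U \<subseteq> {\<zero>\<^bsub>M\<^esub>}" using e(3) M.submod_closed[OF U] by force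
    then show ?thesis using U unfolding submod_def by blast
  qed
qed

context lmod
begin

lemma idempotent_complement_zero:
  assumes "lhom L M M e" "\<And>x. x \<in> carrier M \<Longrightarrow> e (e x) = e x" "x \<in> carrier M"
  shows "e (x \<ominus> e x) = \<zero>"
  using assms lhom_minus[OF lmodule lmodule assms(1) assms(3)] lhom_closed[OF assms(1)]
  by (simp add: r_neg minus_eq)

end

section \<open>Non-split sequences with projective-injective middle term\<close>

locale nonsplit_ses =
  fixes R :: "'k ring" and phi :: "'k \<Rightarrow> 'r" and L :: "'r ring"
    and A :: "('r, 'a) module" and B :: "('r, 'b) module" and C :: "('r, 'c) module"
    and g :: "'a \<Rightarrow> 'b" and f :: "'b \<Rightarrow> 'c"
  assumes artin: "artin_algebra R phi L"
    and fg_A: "fg_lmodule L A" and fg_B: "fg_lmodule L B" and fg_C: "fg_lmodule L C"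
    and ses: "short_exact L A B C g f"
    and nonsplit: "\<not> ses_splits L B C f"
    and proj_B: "proj_mod L B" and inj_B: "inj_mod L B"
begin

lemma lmodule_A: "lmodule L A" and lmodule_B: "lmodule L B" and lmodule_C: "lmodule L C"
  using fg_A fg_B fg_C unfolding fg_lmodule_def by auto

lemma g: "lhom L A B g" and f: "lhom L B C f" and g_inj: "inj_on g (carrier A)"
  and f_surj: "f ` carrier B = carrier C" and image_g: "g ` carrier A = {b \<in> carrier B. f b = \<zero>\<^bsub>C\<^esub>}"
  using ses unfolding short_exact_def by auto

sublocale A: lmod L A by (rule lmod.intro[OF lmodule_A])
sublocale B: lmod L B by (rule lmod.intro[OF lmodule_B])
sublocale C: lmod L C by (rule lmod.intro[OF lmodule_C])

lemma f_g [simp]: "a \<in> carrier A \<Longrightarrow> f (g a) = \<zero>\<^bsub>C\<^esub>"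
  using image_g by auto

lemma kernel_f:
  assumes "b \<in> carrier B" "f b = \<zero>\<^bsub>C\<^esub>" obtains a where "a \<in> carrier A" "b = g a"
  using assms image_g by (metis (mono_tags, lifting) imageE mem_Collect_eq)

lemma g_eq_zero_iff: "a \<in> carrier A \<Longrightarrow> g a = \<zero>\<^bsub>B\<^esub> \<longleftrightarrow> a = \<zero>\<^bsub>A\<^esub>"
  using g_inj lhom_zero[OF lmodule_A lmodule_B g] by (metis A.zero_closed inj_onD)

lemma no_section: "lhom L C B s \<Longrightarrow> (\<And>c. c \<in> carrier C \<Longrightarrow> f (s c) = c) \<Longrightarrow> False"
  using nonsplit unfolding ses_splits_def by blast

lemma no_retraction:
  assumes r: "lhom L B A r" and r_g: "\<And>a. a \<in> carrier A \<Longrightarrow> r (g a) = a"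
  shows False
proof -
  let ?k = "\<lambda>b. b \<ominus>\<^bsub>B\<^esub> g (r b)"
  have k: "lhom L B B ?k" by (rule lhom_diff_fun[OF lmodule_B lhom_id lhom_comp[OF r g]])
  have ker: "?k b = \<zero>\<^bsub>B\<^esub>" if b: "b \<in> carrier B" "f b = \<zero>\<^bsub>C\<^esub>" for b
  proof -
    obtain a where "a \<in> carrier A" "b = g a" using kernel_f[OF b] .
    then show ?thesis using r_g lhom_closed[OF g] by (simp add: B.r_neg B.minus_eq)
  qed
  obtain s where s: "lhom L C B s" and s_f: "\<And>b. b \<in> carrier B \<Longrightarrow> s (f b) = ?k b"
    using lhom_factor_through_surj[OF lmodule_B lmodule_C lmodule_B f f_surj k ker] by blast
  have "f (s c) = c" if c: "c \<in> carrier C" for c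
  proof -
    have "c \<in> f ` carrier B" using f_surj c by simp
    then obtain b where b: "c = f b" "b \<in> carrier B" by (rule imageE)
    have "f (s c) = f b \<ominus>\<^bsub>C\<^esub> f (g (r b))"
      using s_f b lhom_minus[OF lmodule_B lmodule_C f b(2) lhom_closed[OF g lhom_closed[OF r b(2)]]] by simp
    then show ?thesis using b lhom_closed[OF r b(2)] lhom_closed[OF f b(2)] by (simp add: C.minus_eq)
  qed
  then show False using no_section[OF s] by blast
qed

lemma A_nonzero: "carrier A \<noteq> {\<zero>\<^bsub>A\<^esub>}"
proof
  assume A0: "carrier A = {\<zero>\<^bsub>A\<^esub>}"
  have "inj_on f (carrier B)"
  proof (rule lhom_inj_onI[OF lmodule_B lmodule_C f])
    fix b assume "b \<in> carrier B" "f b = \<zero>\<^bsub>C\<^esub>"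
    then obtain a where "a \<in> carrier A" "b = g a" by (rule kernel_f)
    then show "b = \<zero>\<^bsub>B\<^esub>" using A0 lhom_zero[OF lmodule_A lmodule_B g] by simp
  qed
  then have bij: "bij_betw f (carrier B) (carrier C)" using f_surj unfolding bij_betw_def by blast
  show False
    using no_section[OF lhom_inverse[OF lmodule_B lmodule_C f bij]] f_the_inv_into_f_bij_betw[OF bij]
    by blast
qed

lemma C_nonzero: "carrier C \<noteq> {\<zero>\<^bsub>C\<^esub>}"
proof
  assume "carrier C = {\<zero>\<^bsub>C\<^esub>}"
  moreover have "lhom L C B (\<lambda>c. \<zero>\<^bsub>B\<^esub>)" unfolding lhom_def by simp
  ultimately show False using no_section lhom_zero[OF lmodule_B lmodule_C f] by force
qed

lemma spanned_A: obtains S where "spanned_by L A S (\<lambda>x. x)"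
  using fg_lmodule_spanned_by[OF fg_A] by blast

lemma spanned_C: obtains S where "spanned_by L C S (\<lambda>x. x)"
  using fg_lmodule_spanned_by[OF fg_C] by blast

lemma lift_cokernel_endo:
  assumes e: "lhom L C C e"
  obtains p \<phi> where "lhom L B B p" "lhom L A A \<phi>" "\<And>b. b \<in> carrier B \<Longrightarrow> f (p b) = e (f b)"
    "\<And>a. a \<in> carrier A \<Longrightarrow> g (\<phi> a) = p (g a)"
proof -
  obtain p where p: "lhom L B B p" and f_p: "\<And>b. b \<in> carrier B \<Longrightarrow> f (p b) = e (f b)"
    using proj_mod_lift[OF proj_B fg_B fg_C f f_surj lhom_comp[OF f e]] by blast
  have ker: "f (p (g a)) = \<zero>\<^bsub>C\<^esub>" if a: "a \<in> carrier A" for a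
    using f_p[OF lhom_closed[OF g a]] lhom_zero[OF lmodule_C lmodule_C e] a by simp
  obtain \<phi> where \<phi>: "lhom L A A \<phi>" and g_\<phi>: "\<And>a. a \<in> carrier A \<Longrightarrow> g (\<phi> a) = p (g a)"
    using short_exact_lift_to_kernel[OF lmodule_A lmodule_B lmodule_A ses lhom_comp[OF g p] ker] by blast
  show thesis by (rule that[OF p \<phi> f_p g_\<phi>])
qed

lemma extend_kernel_endo:
  assumes e: "lhom L A A e"
  obtains p \<psi> where "lhom L B B p" "lhom L C C \<psi>" "\<And>a. a \<in> carrier A \<Longrightarrow> p (g a) = g (e a)"
    "\<And>b. b \<in> carrier B \<Longrightarrow> \<psi> (f b) = f (p b)"
proof -
  obtain p where p: "lhom L B B p" and p_g: "\<And>a. a \<in> carrier A \<Longrightarrow> p (g a) = g (e a)"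
    using inj_mod_extend[OF inj_B fg_A fg_B g g_inj lhom_comp[OF e g]] by blast
  have ker: "f (p b) = \<zero>\<^bsub>C\<^esub>" if b: "b \<in> carrier B" "f b = \<zero>\<^bsub>C\<^esub>" for b
  proof -
    obtain a where "a \<in> carrier A" "b = g a" using kernel_f[OF b] .
    then show ?thesis using p_g lhom_closed[OF e] by simp
  qed
  obtain \<psi> where \<psi>: "lhom L C C \<psi>" and \<psi>_f: "\<And>b. b \<in> carrier B \<Longrightarrow> \<psi> (f b) = f (p b)"
    using lhom_factor_through_surj[OF lmodule_B lmodule_C lmodule_C f f_surj lhom_comp[OF p f] ker] by blast
  show thesis by (rule that[OF p \<psi> p_g \<psi>_f])
qed

text \<open>Were the restriction nilpotent, a power of \<open>h\<close> would vanish on \<open>A\<close> and factor through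
  a section of \<open>f\<close>.\<close>

lemma kernel_endo_bij:
  assumes ind: "indecomposable L A" and h: "lhom L B B h" and f_h: "\<And>b. b \<in> carrier B \<Longrightarrow> f (h b) = f b"
    and \<phi>: "lhom L A A \<phi>" and g_\<phi>: "\<And>a. a \<in> carrier A \<Longrightarrow> g (\<phi> a) = h (g a)"
  shows "bij_betw \<phi> (carrier A) (carrier A)"
proof (rule ccontr)
  assume "\<not> bij_betw \<phi> (carrier A) (carrier A)"
  moreover obtain S where "spanned_by L A S (\<lambda>x. x)" by (rule spanned_A)
  ultimately obtain n where nil: "\<And>a. a \<in> carrier A \<Longrightarrow> (\<phi> ^^ n) a = \<zero>\<^bsub>A\<^esub>"
    using fitting[OF artin lmodule_A _ ind \<phi>] by blast
  have h_g: "(h ^^ k) (g a) = g ((\<phi> ^^ k) a)" if "a \<in> carrier A" for a k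
    using that by (induct k) (simp_all add: g_\<phi> lhom_closed[OF lhom_funpow[OF \<phi>]])
  have f_h_pow: "f ((h ^^ k) b) = f b" if "b \<in> carrier B" for b k
    using that by (induct k) (simp_all add: f_h lhom_closed[OF lhom_funpow[OF h]])
  have ker: "(h ^^ n) b = \<zero>\<^bsub>B\<^esub>" if b: "b \<in> carrier B" "f b = \<zero>\<^bsub>C\<^esub>" for b
  proof -
    obtain a where "a \<in> carrier A" "b = g a" using kernel_f[OF b] .
    then show ?thesis using h_g nil lhom_zero[OF lmodule_A lmodule_B g] by simp
  qed
  show False
  proof (rule lhom_factor_through_surj[OF lmodule_B lmodule_C lmodule_B f f_surj lhom_funpow[OF h] ker])
    fix s assume s: "lhom L C B s" and s_f: "\<And>b. b \<in> carrier B \<Longrightarrow> s (f b) = (h ^^ n) b"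
    have "f (s c) = c" if c: "c \<in> carrier C" for c
    proof -
      have "c \<in> f ` carrier B" using f_surj c by simp
      then obtain b where "c = f b" "b \<in> carrier B" by (rule imageE)
      then show ?thesis using s_f f_h_pow by simp
    qed
    then show False using no_section[OF s] by blast
  qed
qed

lemma cokernel_endo_bij:
  assumes ind: "indecomposable L C" and h: "lhom L B B h" and h_g: "\<And>a. a \<in> carrier A \<Longrightarrow> h (g a) = g a"
    and \<psi>: "lhom L C C \<psi>" and \<psi>_f: "\<And>b. b \<in> carrier B \<Longrightarrow> \<psi> (f b) = f (h b)"
  shows "bij_betw \<psi> (carrier C) (carrier C)"
proof (rule ccontr)
  assume "\<not> bij_betw \<psi> (carrier C) (carrier C)"
  moreover obtain S where "spanned_by L C S (\<lambda>x. x)" by (rule spanned_C)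
  ultimately obtain n where nil: "\<And>c. c \<in> carrier C \<Longrightarrow> (\<psi> ^^ n) c = \<zero>\<^bsub>C\<^esub>"
    using fitting[OF artin lmodule_C _ ind \<psi>] by blast
  have f_h: "f ((h ^^ k) b) = (\<psi> ^^ k) (f b)" if "b \<in> carrier B" for b k
    using that by (induct k) (simp_all add: \<psi>_f[symmetric] lhom_closed[OF lhom_funpow[OF h]])
  have h_g_pow: "(h ^^ k) (g a) = g a" if "a \<in> carrier A" for a k
    using that by (induct k) (simp_all add: h_g)
  have ker: "f ((h ^^ n) b) = \<zero>\<^bsub>C\<^esub>" if b: "b \<in> carrier B" for b
    using f_h[OF b] nil lhom_closed[OF f b] by simp
  show False
  proof (rule short_exact_lift_to_kernel[OF lmodule_A lmodule_B lmodule_B ses lhom_funpow[OF h] ker])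
    fix r assume r: "lhom L B A r" and g_r: "\<And>b. b \<in> carrier B \<Longrightarrow> g (r b) = (h ^^ n) b"
    have "r (g a) = a" if a: "a \<in> carrier A" for a
      using g_r[OF lhom_closed[OF g a]] h_g_pow[OF a] g_inj a lhom_closed[OF r lhom_closed[OF g a]]
      by (simp add: inj_on_eq_iff)
    then show False using no_retraction[OF r] by blast
  qed
qed

lemma endo_surj_if_left_minimal:
  assumes lmin: "left_minimal L A B g" and p: "lhom L B B p" and \<phi>: "lhom L A A \<phi>"
    and bij: "bij_betw \<phi> (carrier A) (carrier A)" and g_\<phi>: "\<And>a. a \<in> carrier A \<Longrightarrow> g (\<phi> a) = p (g a)"
  shows "p ` carrier B = carrier B"
proof -
  let ?\<phi>' = "the_inv_into (carrier A) \<phi>"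
  have \<phi>': "lhom L A A ?\<phi>'" by (rule lhom_inverse[OF lmodule_A lmodule_A \<phi> bij])
  obtain k where k: "lhom L B B k" and k_g: "\<And>a. a \<in> carrier A \<Longrightarrow> k (g a) = g (?\<phi>' a)"
    using inj_mod_extend[OF inj_B fg_A fg_B g g_inj lhom_comp[OF \<phi>' g]] by blast
  have "p (k (g a)) = g a" if "a \<in> carrier A" for a
    using k_g g_\<phi> that lhom_closed[OF \<phi>'] f_the_inv_into_f_bij_betw[OF bij] by metis
  then have "bij_betw (\<lambda>b. p (k b)) (carrier B) (carrier B)"
    using lmin lhom_comp[OF k p] unfolding left_minimal_def by blast
  then show ?thesis using lhom_closed[OF p] lhom_closed[OF k] unfolding bij_betw_def by blast
qed

lemma endo_inj_if_right_minimal: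
  assumes rmin: "right_minimal L B C f" and p: "lhom L B B p" and \<psi>: "lhom L C C \<psi>"
    and bij: "bij_betw \<psi> (carrier C) (carrier C)" and \<psi>_f: "\<And>b. b \<in> carrier B \<Longrightarrow> \<psi> (f b) = f (p b)"
  shows "inj_on p (carrier B)"
proof -
  let ?\<psi>' = "the_inv_into (carrier C) \<psi>"
  have \<psi>': "lhom L C C ?\<psi>'" by (rule lhom_inverse[OF lmodule_C lmodule_C \<psi> bij])
  obtain k where k: "lhom L B B k" and f_k: "\<And>b. b \<in> carrier B \<Longrightarrow> f (k b) = ?\<psi>' (f b)"
    using proj_mod_lift[OF proj_B fg_B fg_C f f_surj lhom_comp[OF f \<psi>']] by blast
  have "f (k (p b)) = f b" if "b \<in> carrier B" for b
    using f_k \<psi>_f that lhom_closed[OF p] lhom_closed[OF f] the_inv_into_f_f bij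
    unfolding bij_betw_def by metis
  then have "bij_betw (\<lambda>b. k (p b)) (carrier B) (carrier B)"
    using rmin lhom_comp[OF p k] unfolding right_minimal_def by blast
  then show ?thesis unfolding bij_betw_def inj_on_def by metis
qed

end

context nonsplit_ses
begin

lemma cokernel_endo_surj:
  assumes "p ` carrier B = carrier B" "\<And>b. b \<in> carrier B \<Longrightarrow> f (p b) = \<epsilon> (f b)"
  shows "\<epsilon> ` carrier C = carrier C"
proof -
  have "\<epsilon> ` carrier C = (\<lambda>b. \<epsilon> (f b)) ` carrier B" using f_surj by (simp add: image_image[symmetric])
  also have "\<dots> = f ` p ` carrier B" using assms(2) by (simp add: image_image)
  finally show ?thesis using assms(1) f_surj by simp
qed

lemma kernel_endo_inj:
  assumes "inj_on p (carrier B)" "lhom L A A \<epsilon>" "\<And>a. a \<in> carrier A \<Longrightarrow> p (g a) = g (\<epsilon> a)"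
  shows "inj_on \<epsilon> (carrier A)"
proof (rule inj_onI)
  fix a a' assume a: "a \<in> carrier A" "a' \<in> carrier A" "\<epsilon> a = \<epsilon> a'"
  then have "p (g a) = p (g a')" using assms(3) by simp
  then have "g a = g a'" using assms(1) lhom_closed[OF g] a(1,2) by (simp add: inj_on_eq_iff)
  then show "a = a'" using g_inj a(1,2) by (simp add: inj_on_eq_iff)
qed

lemma right_minimal_if:
  assumes ind: "indecomposable L A" and lmin: "left_minimal L A B g"
  shows "right_minimal L B C f"
  unfolding right_minimal_def
proof (intro allI impI)
  fix h assume "lhom L B B h \<and> (\<forall>b\<in>carrier B. f (h b) = f b)"
  then have h: "lhom L B B h" and f_h: "\<And>b. b \<in> carrier B \<Longrightarrow> f (h b) = f b" by auto
  have ker: "f (h (g a)) = \<zero>\<^bsub>C\<^esub>" if a: "a \<in> carrier A" for a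
    using f_h[OF lhom_closed[OF g a]] a by simp
  obtain \<phi> where \<phi>: "lhom L A A \<phi>" and g_\<phi>: "\<And>a. a \<in> carrier A \<Longrightarrow> g (\<phi> a) = h (g a)"
    using short_exact_lift_to_kernel[OF lmodule_A lmodule_B lmodule_A ses lhom_comp[OF g h] ker] by blast
  have bij: "bij_betw \<phi> (carrier A) (carrier A)" by (rule kernel_endo_bij[OF ind h f_h \<phi> g_\<phi>])
  have "inj_on h (carrier B)"
  proof (rule lhom_inj_onI[OF lmodule_B lmodule_B h])
    fix b assume b: "b \<in> carrier B" "h b = \<zero>\<^bsub>B\<^esub>"
    then have "f b = \<zero>\<^bsub>C\<^esub>" using f_h[OF b(1)] lhom_zero[OF lmodule_B lmodule_C f] by simp
    then obtain a where a: "a \<in> carrier A" "b = g a" using kernel_f[OF b(1)] by blast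
    then have "\<phi> a = \<zero>\<^bsub>A\<^esub>" using g_\<phi>[OF a(1)] b(2) g_eq_zero_iff[OF lhom_closed[OF \<phi> a(1)]] by simp
    then have "a = \<zero>\<^bsub>A\<^esub>"
      using inj_onD[OF bij_betw_imp_inj_on[OF bij], of a "\<zero>\<^bsub>A\<^esub>"] a(1)
        lhom_zero[OF lmodule_A lmodule_A \<phi>] by simp
    then show "b = \<zero>\<^bsub>B\<^esub>" using a lhom_zero[OF lmodule_A lmodule_B g] by simp
  qed
  then show "bij_betw h (carrier B) (carrier B)"
    using endo_surj_if_left_minimal[OF lmin h \<phi> bij g_\<phi>] unfolding bij_betw_def by blast
qed

lemma left_minimal_if:
  assumes ind: "indecomposable L C" and rmin: "right_minimal L B C f"
  shows "left_minimal L A B g"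
  unfolding left_minimal_def
proof (intro allI impI)
  fix h assume "lhom L B B h \<and> (\<forall>a\<in>carrier A. h (g a) = g a)"
  then have h: "lhom L B B h" and h_g: "\<And>a. a \<in> carrier A \<Longrightarrow> h (g a) = g a" by auto
  have ker: "f (h b) = \<zero>\<^bsub>C\<^esub>" if b: "b \<in> carrier B" "f b = \<zero>\<^bsub>C\<^esub>" for b
  proof -
    obtain a where "a \<in> carrier A" "b = g a" using kernel_f[OF b] .
    then show ?thesis using h_g by simp
  qed
  obtain \<psi> where \<psi>: "lhom L C C \<psi>" and \<psi>_f: "\<And>b. b \<in> carrier B \<Longrightarrow> \<psi> (f b) = f (h b)"
    using lhom_factor_through_surj[OF lmodule_B lmodule_C lmodule_C f f_surj lhom_comp[OF h f] ker]
    by blast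
  have bij: "bij_betw \<psi> (carrier C) (carrier C)" by (rule cokernel_endo_bij[OF ind h h_g \<psi> \<psi>_f])
  have "carrier B \<subseteq> h ` carrier B"
  proof
    fix b assume b: "b \<in> carrier B"
    have "f b \<in> \<psi> ` carrier C" using bij lhom_closed[OF f b] unfolding bij_betw_def by simp
    then obtain c where c: "f b = \<psi> c" "c \<in> carrier C" by (rule imageE)
    have "c \<in> f ` carrier B" using f_surj c(2) by simp
    then obtain b' where b': "c = f b'" "b' \<in> carrier B" by (rule imageE)
    have hb': "h b' \<in> carrier B" using lhom_closed[OF h b'(2)] .
    have "f (b \<ominus>\<^bsub>B\<^esub> h b') = \<zero>\<^bsub>C\<^esub>"
      using lhom_minus[OF lmodule_B lmodule_C f b hb'] c b' \<psi>_f[OF b'(2)] lhom_closed[OF f b]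
      by (simp add: C.minus_eq C.r_neg)
    then obtain a where a: "a \<in> carrier A" "b \<ominus>\<^bsub>B\<^esub> h b' = g a"
      using kernel_f[OF B.minus_closed[OF b hb']] by blast
    have "b = h b' \<oplus>\<^bsub>B\<^esub> h (g a)" using B.add_minus_cancel[OF b hb'] a h_g by simp
    also have "\<dots> = h (b' \<oplus>\<^bsub>B\<^esub> g a)" using lhom_add[OF h b'(2) lhom_closed[OF g a(1)]] by simp
    finally show "b \<in> h ` carrier B" using b'(2) lhom_closed[OF g a(1)] by blast
  qed
  then show "bij_betw h (carrier B) (carrier B)"
    using endo_inj_if_right_minimal[OF rmin h \<psi> bij \<psi>_f] lhom_closed[OF h]
    unfolding bij_betw_def by blast
qed

text \<open>For an idempotent \<open>e\<close> of \<open>C\<close>, lifts of \<open>e\<close> and \<open>1 - e\<close> to \<open>B\<close> restrict to endomorphisms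
  of \<open>A\<close> whose sum is an automorphism; as \<open>End A\<close> is local, one of them is an automorphism, and
  left minimality forces the corresponding idempotent to be surjective.\<close>

lemma indecomposable_C_if:
  assumes ind: "indecomposable L A" and lmin: "left_minimal L A B g"
  shows "indecomposable L C"
proof (rule indecomposableI_idempotents[OF lmodule_C C_nonzero])
  fix e assume e: "lhom L C C e" and idem: "\<And>c. c \<in> carrier C \<Longrightarrow> e (e c) = e c"
  have e': "lhom L C C (\<lambda>c. c \<ominus>\<^bsub>C\<^esub> e c)" by (rule lhom_diff_fun[OF lmodule_C lhom_id e])
  obtain p1 \<phi>1 where p1: "lhom L B B p1" and \<phi>1: "lhom L A A \<phi>1"
    and f_p1: "\<And>b. b \<in> carrier B \<Longrightarrow> f (p1 b) = e (f b)"
    and g_\<phi>1: "\<And>a. a \<in> carrier A \<Longrightarrow> g (\<phi>1 a) = p1 (g a)"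
    using lift_cokernel_endo[OF e] by blast
  obtain p2 \<phi>2 where p2: "lhom L B B p2" and \<phi>2: "lhom L A A \<phi>2"
    and f_p2: "\<And>b. b \<in> carrier B \<Longrightarrow> f (p2 b) = f b \<ominus>\<^bsub>C\<^esub> e (f b)"
    and g_\<phi>2: "\<And>a. a \<in> carrier A \<Longrightarrow> g (\<phi>2 a) = p2 (g a)"
    using lift_cokernel_endo[OF e'] by blast
  have h: "lhom L B B (\<lambda>b. p1 b \<oplus>\<^bsub>B\<^esub> p2 b)" by (rule lhom_add_fun[OF lmodule_B p1 p2])
  have \<Phi>: "lhom L A A (\<lambda>a. \<phi>1 a \<oplus>\<^bsub>A\<^esub> \<phi>2 a)" by (rule lhom_add_fun[OF lmodule_A \<phi>1 \<phi>2])
  have f_h: "f (p1 b \<oplus>\<^bsub>B\<^esub> p2 b) = f b" if b: "b \<in> carrier B" for b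
    using lhom_add[OF f lhom_closed[OF p1 b] lhom_closed[OF p2 b]] f_p1[OF b] f_p2[OF b]
      C.add_minus_cancel[OF lhom_closed[OF f b] lhom_closed[OF e lhom_closed[OF f b]]] by simp
  have g_\<Phi>: "g (\<phi>1 a \<oplus>\<^bsub>A\<^esub> \<phi>2 a) = p1 (g a) \<oplus>\<^bsub>B\<^esub> p2 (g a)" if a: "a \<in> carrier A" for a
    using lhom_add[OF g lhom_closed[OF \<phi>1 a] lhom_closed[OF \<phi>2 a]] g_\<phi>1[OF a] g_\<phi>2[OF a] by simp
  obtain S where S: "spanned_by L A S (\<lambda>x. x)" using spanned_A by blast
  have "bij_betw \<phi>1 (carrier A) (carrier A) \<or> bij_betw \<phi>2 (carrier A) (carrier A)"
    by (rule indecomposable_endo_sum_bij[OF artin lmodule_A S ind \<phi>1 \<phi>2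
          kernel_endo_bij[OF ind h f_h \<Phi> g_\<Phi>]])
  then show "(\<forall>c\<in>carrier C. e c = c) \<or> (\<forall>c\<in>carrier C. e c = \<zero>\<^bsub>C\<^esub>)"
  proof
    assume "bij_betw \<phi>1 (carrier A) (carrier A)"
    then have surj: "e ` carrier C = carrier C"
      by (rule cokernel_endo_surj[OF endo_surj_if_left_minimal[OF lmin p1 \<phi>1 _ g_\<phi>1] f_p1])
    show ?thesis
    proof (rule disjI1, intro ballI)
      fix c assume "c \<in> carrier C"
      then have "c \<in> e ` carrier C" using surj by simp
      then obtain c' where "c = e c'" "c' \<in> carrier C" by (rule imageE)
      then show "e c = c" using idem by simp
    qed
  next
    assume "bij_betw \<phi>2 (carrier A) (carrier A)"
    then have surj: "(\<lambda>c. c \<ominus>\<^bsub>C\<^esub> e c) ` carrier C = carrier C"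
      by (rule cokernel_endo_surj[OF endo_surj_if_left_minimal[OF lmin p2 \<phi>2 _ g_\<phi>2] f_p2])
    show ?thesis
    proof (rule disjI2, intro ballI)
      fix c assume "c \<in> carrier C"
      then have "c \<in> (\<lambda>c. c \<ominus>\<^bsub>C\<^esub> e c) ` carrier C" using surj by simp
      then obtain c' where "c = c' \<ominus>\<^bsub>C\<^esub> e c'" "c' \<in> carrier C" by (rule imageE)
      then show "e c = \<zero>\<^bsub>C\<^esub>" using C.idempotent_complement_zero[OF e idem] by simp
    qed
  qed
qed

lemma indecomposable_A_if:
  assumes ind: "indecomposable L C" and rmin: "right_minimal L B C f"
  shows "indecomposable L A"
proof (rule indecomposableI_idempotents[OF lmodule_A A_nonzero])
  fix e assume e: "lhom L A A e" and idem: "\<And>a. a \<in> carrier A \<Longrightarrow> e (e a) = e a"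
  have e': "lhom L A A (\<lambda>a. a \<ominus>\<^bsub>A\<^esub> e a)" by (rule lhom_diff_fun[OF lmodule_A lhom_id e])
  obtain p1 \<psi>1 where p1: "lhom L B B p1" and \<psi>1: "lhom L C C \<psi>1"
    and p1_g: "\<And>a. a \<in> carrier A \<Longrightarrow> p1 (g a) = g (e a)"
    and \<psi>1_f: "\<And>b. b \<in> carrier B \<Longrightarrow> \<psi>1 (f b) = f (p1 b)"
    using extend_kernel_endo[OF e] by blast
  obtain p2 \<psi>2 where p2: "lhom L B B p2" and \<psi>2: "lhom L C C \<psi>2"
    and p2_g: "\<And>a. a \<in> carrier A \<Longrightarrow> p2 (g a) = g (a \<ominus>\<^bsub>A\<^esub> e a)"
    and \<psi>2_f: "\<And>b. b \<in> carrier B \<Longrightarrow> \<psi>2 (f b) = f (p2 b)"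
    using extend_kernel_endo[OF e'] by blast
  have h: "lhom L B B (\<lambda>b. p1 b \<oplus>\<^bsub>B\<^esub> p2 b)" by (rule lhom_add_fun[OF lmodule_B p1 p2])
  have \<Psi>: "lhom L C C (\<lambda>c. \<psi>1 c \<oplus>\<^bsub>C\<^esub> \<psi>2 c)" by (rule lhom_add_fun[OF lmodule_C \<psi>1 \<psi>2])
  have h_g: "p1 (g a) \<oplus>\<^bsub>B\<^esub> p2 (g a) = g a" if a: "a \<in> carrier A" for a
  proof -
    have ea: "e a \<in> carrier A" "a \<ominus>\<^bsub>A\<^esub> e a \<in> carrier A" using lhom_closed[OF e a] a by auto
    show ?thesis
      using p1_g[OF a] p2_g[OF a] lhom_add[OF g ea] A.add_minus_cancel[OF a ea(1)] by simp
  qed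
  have \<Psi>_f: "\<psi>1 (f b) \<oplus>\<^bsub>C\<^esub> \<psi>2 (f b) = f (p1 b \<oplus>\<^bsub>B\<^esub> p2 b)" if b: "b \<in> carrier B" for b
    using lhom_add[OF f lhom_closed[OF p1 b] lhom_closed[OF p2 b]] \<psi>1_f[OF b] \<psi>2_f[OF b] by simp
  obtain S where S: "spanned_by L C S (\<lambda>x. x)" using spanned_C by blast
  have "bij_betw \<psi>1 (carrier C) (carrier C) \<or> bij_betw \<psi>2 (carrier C) (carrier C)"
    by (rule indecomposable_endo_sum_bij[OF artin lmodule_C S ind \<psi>1 \<psi>2
          cokernel_endo_bij[OF ind h h_g \<Psi> \<Psi>_f]])
  then show "(\<forall>a\<in>carrier A. e a = a) \<or> (\<forall>a\<in>carrier A. e a = \<zero>\<^bsub>A\<^esub>)"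
  proof
    assume "bij_betw \<psi>1 (carrier C) (carrier C)"
    then have inj: "inj_on e (carrier A)"
      by (rule kernel_endo_inj[OF endo_inj_if_right_minimal[OF rmin p1 \<psi>1 _ \<psi>1_f] e p1_g])
    show ?thesis
    proof (rule disjI1, intro ballI)
      fix a assume "a \<in> carrier A"
      then show "e a = a" using inj_onD[OF inj] idem lhom_closed[OF e] by simp
    qed
  next
    assume "bij_betw \<psi>2 (carrier C) (carrier C)"
    then have inj: "inj_on (\<lambda>a. a \<ominus>\<^bsub>A\<^esub> e a) (carrier A)"
      by (rule kernel_endo_inj[OF endo_inj_if_right_minimal[OF rmin p2 \<psi>2 _ \<psi>2_f] e' p2_g])
    show ?thesis
    proof (rule disjI2, intro ballI)
      fix a assume a: "a \<in> carrier A"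
      show "e a = \<zero>\<^bsub>A\<^esub>"
        using inj_onD[OF inj, of "e a" "\<zero>\<^bsub>A\<^esub>"] idem[OF a] lhom_closed[OF e a]
          lhom_zero[OF lmodule_A lmodule_A e] by (simp add: A.r_neg A.minus_eq)
    qed
  qed
qed

end

theorem lemma2p6:
  fixes R :: "'k ring" and phi :: "'k \<Rightarrow> 'r" and L :: "'r ring"
    and A :: "('r, 'a) module" and B :: "('r, 'b) module" and C :: "('r, 'c) module"
    and g :: "'a \<Rightarrow> 'b" and f :: "'b \<Rightarrow> 'c"
  assumes "artin_algebra R phi L"
    and "fg_lmodule L A" and "fg_lmodule L B" and "fg_lmodule L C"
    and "short_exact L A B C g f"
    and "\<not> ses_splits L B C f"
    and "proj_mod L B" and "inj_mod L B"
  shows "(indecomposable L A \<and> left_minimal L A B g) \<longleftrightarrow>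
         (indecomposable L C \<and> right_minimal L B C f)"
proof -
  interpret nonsplit_ses R phi L A B C g f by (rule nonsplit_ses.intro[OF assms])
  show ?thesis
    using right_minimal_if left_minimal_if indecomposable_C_if indecomposable_A_if by blast
qed

end
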